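(* Let $F:D_1\to\mathbb{C}^n$ be analytic with $F(z)=Az+f(z)$, $f(0)=0$, $Df(0)=0$, $A\in\mathbb{C}^{n\times n}$. Let $\hat H=\sum_{|\alpha|\ge1}h_\alpha z^\alpha$ ($h_\alpha\in\mathbb{C}^n$) be a formal power series with $\hat H(z)=z+O(|z|^2)$ which formally satisfies $D\hat H(z)\cdot F(z)=A\hat H(z)$, and which is Gevrey-$s$ ($s>0$): there are $A_1,B_1>0$ with $|h_\alpha|\le A_1B_1^{-s|\alpha|}(|\alpha|!)^s$ for all $|\alpha|\ge1$. For each positive integer $N$ let $\mathcal{H}_N(z)=\sum_{1\le|\alpha|\le N}h_\alpha z^\alpha$ and $\mathcal{R}_N(z)=D\mathcal{H}_N(z)\cdot F(z)-A\mathcal{H}_N(z)$. Then: (1) $\partial_z^\alpha\mathcal{R}_N(0)=0$ for all $\alpha\in\mathbb{N}^n$ with $|\alpha|\le N$; (2) for every $0<r<1$ there exist positive constants $A_2,B_2$ (independent of $N$ and $\alpha$) such that for all $N$ and all $|\alpha|\ge N+1$, $\big|\frac{1}{\alpha!}\partial_z^\alpha\mathcal{R}_N(0)\big|\le A_2r^{-|\alpha|}B_2^{-sN}(N!)^s$; (3) for every $0<r<1$ there exist positive constants $A_3,B_3$ (independent of $N$) such that for all $N$ and all $|z|<r/4$, $|\mathcal{R}_N(z)|\le A_3B_3^{-sN}(N!)^s\big(|z|/r\big)^{N+1}$.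
   Context: $D_1=\{z\in\mathbb{C}^n:|z_j|<1\}$; $|z|=\max_j|z_j|$; for $\alpha\in\mathbb{N}^n$, $|\alpha|=\sum\alpha_j$, $\alpha!=\alpha_1!\cdots\alpha_n!$, $z^\alpha=z_1^{\alpha_1}\cdots z_n^{\alpha_n}$, and $\frac{1}{\alpha!}\partial_z^\alpha=\frac{1}{\alpha_1!\cdots\alpha_n!}\frac{\partial^{|\alpha|}}{\partial z_1^{\alpha_1}\cdots\partial z_n^{\alpha_n}}$. *)

theory Defs
  imports "HOL-Analysis.Analysis"
begin

text \<open>Vectors in C^n are represented as complex^'n, with 'n a finite index type
  (n = CARD('n)).  Multi-indices are functions 'n \<Rightarrow> nat.\<close>

definition mdeg :: "('n::finite \<Rightarrow> nat) \<Rightarrow> nat" where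
  "mdeg \<alpha> = (\<Sum>j\<in>UNIV. \<alpha> j)"

definition mfact :: "('n::finite \<Rightarrow> nat) \<Rightarrow> real" where
  "mfact \<alpha> = (\<Prod>j\<in>UNIV. fact (\<alpha> j))"

definition mpow :: "complex^'n::finite \<Rightarrow> ('n \<Rightarrow> nat) \<Rightarrow> complex" where
  "mpow z \<alpha> = (\<Prod>j\<in>UNIV. (z $ j) ^ (\<alpha> j))"

definition eidx :: "'n \<Rightarrow> ('n \<Rightarrow> nat)" where
  "eidx j = (\<lambda>k. if k = j then 1 else 0)"

definition supn :: "complex^'n::finite \<Rightarrow> real" where
  "supn z = Max (range (\<lambda>j. cmod (z $ j)))"

definition polydisc1 :: "(complex^'n::finite) set" where
  "polydisc1 = {z. \<forall>j. cmod (z $ j) < 1}"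

definition analytic_vec :: "(complex^'n::finite) set \<Rightarrow> (complex^'n \<Rightarrow> complex^'m) \<Rightarrow> bool" where
  "analytic_vec S F \<longleftrightarrow> (\<forall>w\<in>S. \<exists>e>0. \<exists>c :: ('n \<Rightarrow> nat) \<Rightarrow> complex^'m.
      \<forall>z. supn (z - w) < e \<longrightarrow>
        ((\<lambda>\<alpha>. \<chi> i. mpow (z - w) \<alpha> * c \<alpha> $ i) has_sum F z) UNIV)"

definition pd :: "'n \<Rightarrow> (complex^'n::finite \<Rightarrow> complex) \<Rightarrow> complex^'n \<Rightarrow> complex" where
  "pd j g z = deriv (\<lambda>t. g (\<chi> k. if k = j then t else z $ k)) (z $ j)"

text \<open>higher partial derivative \<partial>^\<alpha>: apply pd along a list of directions in which
  each j occurs \<alpha> j times (order irrelevant for analytic functions)\<close>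
definition pdiff :: "('n::finite \<Rightarrow> nat) \<Rightarrow> (complex^'n \<Rightarrow> complex) \<Rightarrow> complex^'n \<Rightarrow> complex" where
  "pdiff \<alpha> g = foldr pd (SOME L. \<forall>j. count_list L j = \<alpha> j) g"

definition tcoeff :: "(complex^'n::finite \<Rightarrow> complex^'m) \<Rightarrow> ('n \<Rightarrow> nat) \<Rightarrow> complex^'m" where
  "tcoeff F \<alpha> = (\<chi> i. pdiff \<alpha> (\<lambda>z. F z $ i) 0 / of_real (mfact \<alpha>))"

definition truncH :: "(('n::finite \<Rightarrow> nat) \<Rightarrow> complex^'n) \<Rightarrow> nat \<Rightarrow> complex^'n \<Rightarrow> complex^'n" where
  "truncH h N z = (\<Sum>\<alpha>\<in>{\<alpha>. 1 \<le> mdeg \<alpha> \<and> mdeg \<alpha> \<le> N}. \<chi> i. mpow z \<alpha> * h \<alpha> $ i)"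

definition remR :: "complex^'n^'n \<Rightarrow> (complex^'n::finite \<Rightarrow> complex^'n) \<Rightarrow>
     (('n \<Rightarrow> nat) \<Rightarrow> complex^'n) \<Rightarrow> nat \<Rightarrow> complex^'n \<Rightarrow> complex^'n" where
  "remR A F h N z = (\<chi> i. (\<Sum>j\<in>UNIV. pd j (\<lambda>w. truncH h N w $ i) z * F z $ j))
                     - A *v truncH h N z"

text \<open>formal identity D\<hat>H \<cdot> F = A \<hat>H, coefficientwise, with F expanded in its Taylor series at 0:
  coefficient of z^\<gamma> of \<Sum>_j \<partial>_j \<hat>H_i F_j equals that of (A \<hat>H)_i\<close>
definition formal_conj :: "complex^'n^'n \<Rightarrow> (complex^'n::finite \<Rightarrow> complex^'n) \<Rightarrow>
     (('n \<Rightarrow> nat) \<Rightarrow> complex^'n) \<Rightarrow> bool" where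
  "formal_conj A F h \<longleftrightarrow> (\<forall>\<gamma> i.
     (\<Sum>j\<in>UNIV. \<Sum>\<alpha>\<in>{\<alpha>. (\<forall>k. \<alpha> k \<le> \<gamma> k + eidx j k) \<and> 1 \<le> \<alpha> j}.
         of_nat (\<alpha> j) * h \<alpha> $ i * tcoeff F (\<lambda>k. \<gamma> k + eidx j k - \<alpha> k) $ j)
     = (A *v h \<gamma>) $ i)"

end

theory Submission
  imports Defs "HOL-Complex_Analysis.Complex_Analysis" "HOL-Library.Function_Algebras"
begin

text \<open>
  On the unit polydisc every component of \<open>F\<close> is the sum of its Taylor series
  \<open>F\<^sub>j z = (\<Sum>\<delta>. c\<^sub>j \<delta> * z\<^sup>\<delta>)\<close>: analyticity at \<open>0\<close> propagates along the complex lines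
  through \<open>0\<close>, and averaging over tori gives the Cauchy estimates \<open>|c\<^sub>j \<delta>| \<le> M\<^sub>R / R\<^sup>|\<^sup>\<delta>\<^sup>|\<close>
  for every \<open>R < 1\<close>. Since \<open>H\<^sub>N\<close> is a polynomial, \<open>R\<^sub>N\<close> is then a convergent power series
  whose coefficient of \<open>z\<^sup>\<gamma>\<close> is a finite convolution of the \<open>h \<alpha>\<close>, \<open>1 \<le> |\<alpha>| \<le> N\<close>, with the
  \<open>c\<^sub>j\<close>. For \<open>|\<gamma>| \<le> N\<close> this is the coefficient of \<open>z\<^sup>\<gamma>\<close> in the formal identity
  \<open>DH F = A H\<close>, because the one missing term carries the factor \<open>F 0 = 0\<close>; so it vanishes.
  For \<open>|\<gamma>| > N\<close> the Cauchy estimates and the Gevrey bounds on the \<open>h \<alpha>\<close>, \<open>|\<alpha>| \<le> N\<close>, bound it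
  by \<open>M r\<^sup>-\<^sup>|\<^sup>\<gamma>\<^sup>| b\<^sup>N (N!)\<^sup>s\<close>, which is (2); summing this tail for \<open>|z| < r/4\<close> gives (3).
  Partial derivatives at \<open>0\<close> are matched with Taylor coefficients by termwise
  differentiation.
\<close>

section \<open>The max norm and multi-indices\<close>

lemma norm_nth_le_supn: "cmod (z $ j) \<le> supn z"
  unfolding supn_def by (rule Max_ge) auto

lemma supn_le_iff: "supn z \<le> X \<longleftrightarrow> (\<forall>j. cmod (z $ j) \<le> X)"
  unfolding supn_def by (subst Max_le_iff) auto

lemma supn_less_iff: "supn z < X \<longleftrightarrow> (\<forall>j. cmod (z $ j) < X)"
  unfolding supn_def by (subst Max_less_iff) auto

lemma supn_eq_norm_nth: obtains j where "supn z = cmod (z $ j)"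
proof -
  have "supn z \<in> range (\<lambda>j. cmod (z $ j))"
    unfolding supn_def by (rule Max_in) auto
  then show ?thesis using that by auto
qed

lemma supn_nonneg: "0 \<le> supn z"
  using norm_nth_le_supn[of z] norm_ge_zero order_trans by blast

lemma supn_le_norm: "supn z \<le> norm z"
  unfolding supn_le_iff by (simp add: Finite_Cartesian_Product.norm_nth_le)

lemma norm_le_card_supn: "norm (z::complex^'n::finite) \<le> real CARD('n) * supn z"
proof -
  have "norm z = L2_set (\<lambda>i. norm (z $ i)) UNIV" by (simp add: norm_vec_def)
  also have "\<dots> \<le> (\<Sum>i\<in>UNIV. norm (z $ i))" by (rule L2_set_le_sum) simp
  also have "\<dots> \<le> (\<Sum>i\<in>(UNIV::'n set). supn z)" by (intro sum_mono norm_nth_le_supn)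
  finally show ?thesis by simp
qed

lemma supn_smult: "supn (t *s z) = cmod t * supn z"
proof (rule antisym)
  show "supn (t *s z) \<le> cmod t * supn z"
    unfolding supn_le_iff by (auto simp: norm_mult intro: mult_left_mono norm_nth_le_supn)
  obtain j where "supn z = cmod (z $ j)" by (rule supn_eq_norm_nth)
  then show "cmod t * supn z \<le> supn (t *s z)"
    using norm_nth_le_supn[of "t *s z" j] by (simp add: norm_mult)
qed

lemma supn_zero [simp]: "supn (0::complex^'n::finite) = 0"
  using supn_smult[of 0 "0::complex^'n"] by simp

lemma supn_const: "supn (\<chi> k::'n::finite. c) = cmod c"
proof (rule antisym)
  show "supn (\<chi> k::'n. c) \<le> cmod c" unfolding supn_le_iff by simp
  show "cmod c \<le> supn (\<chi> k::'n. c)" using norm_nth_le_supn[of "\<chi> k::'n. c" undefined] by simp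
qed

lemma supn_triangle: "supn (a + b) \<le> supn a + supn b"
  unfolding supn_le_iff
  by (metis add_mono norm_triangle_ineq order_trans norm_nth_le_supn vector_add_component)

lemma supn_minus_commute: "supn (a - b) = supn (b - a)"
  unfolding supn_def by (simp add: norm_minus_commute)

lemma continuous_on_supn: "continuous_on S supn"
proof -
  have "\<bar>supn a - supn b\<bar> \<le> norm (a - b)" for a b :: "complex^'n"
    using supn_triangle[of "a - b" b] supn_triangle[of "b - a" a] supn_minus_commute[of a b]
      supn_le_norm[of "a - b"] by auto
  then have "lipschitz_on 1 S supn"
    by (intro lipschitz_onI) (auto simp: dist_norm dist_real_def)
  then show ?thesis by (rule lipschitz_on_continuous_on)
qed

lemma compact_supn_le: "compact {z::complex^'n::finite. supn z \<le> R}"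
proof (subst compact_eq_bounded_closed, intro conjI)
  have "norm z \<le> real CARD('n) * R" if "supn z \<le> R" for z :: "complex^'n"
    using norm_le_card_supn[of z] mult_left_mono[OF that, of "real CARD('n)"] by linarith
  then show "bounded {z::complex^'n. supn z \<le> R}"
    unfolding bounded_iff by blast
  show "closed {z::complex^'n. supn z \<le> R}"
    by (rule closed_Collect_le[OF continuous_on_supn continuous_on_const])
qed

lemma polydisc1_iff: "z \<in> polydisc1 \<longleftrightarrow> supn z < 1"
  unfolding polydisc1_def supn_less_iff by simp

lemma nth_le_mdeg: "\<alpha> j \<le> mdeg \<alpha>"
  unfolding mdeg_def by (rule member_le_sum) auto

lemma mdeg_eq_0_iff: "mdeg \<alpha> = 0 \<longleftrightarrow> \<alpha> = 0"
  unfolding mdeg_def by (auto simp: fun_eq_iff)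

lemma mdeg_add: "mdeg (\<alpha> + \<beta>) = mdeg \<alpha> + mdeg \<beta>"
  unfolding mdeg_def by (simp add: sum.distrib)

lemma mdeg_eidx: "mdeg (eidx j) = 1"
  unfolding mdeg_def eidx_def by simp

lemma mdeg_mono: "\<alpha> \<le> \<beta> \<Longrightarrow> mdeg \<alpha> \<le> mdeg \<beta>"
  unfolding mdeg_def le_fun_def by (rule sum_mono) simp

lemma eq_if_le_and_mdeg_le:
  assumes "\<alpha> \<le> \<beta>" "mdeg \<beta> \<le> mdeg \<alpha>"
  shows "\<alpha> = \<beta>"
proof -
  have "\<beta> = \<alpha> + (\<beta> - \<alpha>)"
    using assms(1) by (auto simp: le_fun_def fun_eq_iff)
  then have "mdeg \<beta> = mdeg \<alpha> + mdeg (\<beta> - \<alpha>)"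
    by (metis mdeg_add)
  then have "mdeg (\<beta> - \<alpha>) = 0" using assms(2) by simp
  then show ?thesis using assms(1) by (auto simp: mdeg_eq_0_iff le_fun_def fun_eq_iff intro: antisym)
qed

lemma subset_PiE_mdeg_le: "{\<alpha>. mdeg \<alpha> \<le> N} \<subseteq> PiE UNIV (\<lambda>_. {..N})"
  using nth_le_mdeg order_trans by fastforce

lemma finite_mdeg_le: "finite {\<alpha>::'n::finite \<Rightarrow> nat. mdeg \<alpha> \<le> N}"
  by (rule finite_subset[OF subset_PiE_mdeg_le]) (simp add: finite_PiE)

lemma mfact_pos: "mfact \<alpha> > 0"
  unfolding mfact_def by (intro prod_pos) auto

lemma norm_mpow_le: "cmod (mpow z \<alpha>) \<le> supn z ^ mdeg \<alpha>"
proof -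
  have "cmod (mpow z \<alpha>) = (\<Prod>j\<in>UNIV. cmod (z $ j) ^ \<alpha> j)"
    unfolding mpow_def by (simp add: prod_norm[symmetric] norm_power)
  also have "\<dots> \<le> (\<Prod>j\<in>UNIV. supn z ^ \<alpha> j)"
    by (intro prod_mono conjI power_mono norm_nth_le_supn) auto
  also have "\<dots> = supn z ^ mdeg \<alpha>"
    unfolding mdeg_def by (simp add: power_sum)
  finally show ?thesis .
qed

lemma mpow_smult: "mpow (t *s z) \<alpha> = t ^ mdeg \<alpha> * mpow z \<alpha>"
  unfolding mpow_def mdeg_def by (simp add: power_mult_distrib prod.distrib power_sum)

lemma mpow_const: "mpow (\<chi> k. c) \<alpha> = c ^ mdeg \<alpha>"
  unfolding mpow_def mdeg_def by (simp add: power_sum)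

lemma mpow_zero: "mpow 0 \<alpha> = (if \<alpha> = 0 then 1 else 0)"
  unfolding mpow_def by (auto simp: prod_zero_iff fun_eq_iff)

lemma mpow_add: "mpow z (\<alpha> + \<beta>) = mpow z \<alpha> * mpow z \<beta>"
  unfolding mpow_def by (simp add: power_add prod.distrib)

lemma sum_power_mdeg_le:
  fixes q :: real
  assumes "0 \<le> q" "q < 1" "finite X"
  shows "(\<Sum>\<alpha>\<in>X. q ^ mdeg (\<alpha>::'n::finite\<Rightarrow>nat)) \<le> (1 / (1 - q)) ^ CARD('n)"
proof -
  obtain K where K: "X \<subseteq> {\<alpha>. mdeg \<alpha> \<le> K}"
    using finite_nat_set_iff_bounded_le[of "mdeg ` X"] assms(3) by auto
  have "(\<Sum>\<alpha>\<in>X. q ^ mdeg \<alpha>) \<le> (\<Sum>\<alpha>\<in>PiE (UNIV::'n set) (\<lambda>_. {..K}). q ^ mdeg \<alpha>)"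
    using K subset_PiE_mdeg_le assms by (intro sum_mono2 finite_PiE) auto
  also have "\<dots> = (\<Sum>\<alpha>\<in>PiE (UNIV::'n set) (\<lambda>_. {..K}). \<Prod>j\<in>UNIV. q ^ \<alpha> j)"
    unfolding mdeg_def by (simp add: power_sum)
  also have "\<dots> = (\<Prod>j\<in>(UNIV::'n set). \<Sum>k\<le>K. q ^ k)"
    by (subst prod_sum_PiE) auto
  also have "\<dots> \<le> (\<Prod>j\<in>(UNIV::'n set). 1 / (1 - q))"
  proof (intro prod_mono conjI)
    have "(\<Sum>k\<le>K. q ^ k) = (1 - q ^ Suc K) / (1 - q)"
      using assms
      by (subst sum_gp_basic[symmetric]) (auto simp: field_simps atMost_atLeast0 lessThan_Suc_atMost)
    also have "\<dots> \<le> 1 / (1 - q)" using assms by (intro divide_right_mono) auto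
    finally show "(\<Sum>k\<le>K. q ^ k) \<le> 1 / (1 - q)" .
  qed (use assms in \<open>auto intro: sum_nonneg\<close>)
  finally show ?thesis by simp
qed

lemma summable_on_power_mdeg:
  fixes q :: real
  assumes "0 \<le> q" "q < 1"
  shows "(\<lambda>\<alpha>::'n::finite\<Rightarrow>nat. q ^ mdeg \<alpha>) summable_on UNIV"
  by (rule nonneg_bounded_partial_sums_imp_summable_on[where C="(1/(1-q)) ^ CARD('n)"])
     (use assms in \<open>auto intro!: eventually_finite_subsets_at_top_weakI sum_power_mdeg_le\<close>)

lemma infsum_power_mdeg_le:
  fixes q :: real
  assumes "0 \<le> q" "q < 1"
  shows "(\<Sum>\<^sub>\<infinity>\<alpha>::'n::finite\<Rightarrow>nat. q ^ mdeg \<alpha>) \<le> (1 / (1 - q)) ^ CARD('n)"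
  by (rule infsum_le_finite_sums[OF summable_on_power_mdeg[OF assms]])
     (use assms in \<open>auto intro: sum_power_mdeg_le\<close>)

section \<open>Power series in several complex variables\<close>

lemma has_sum_diff:
  fixes f g :: "'a \<Rightarrow> 'b::topological_ab_group_add"
  assumes "(f has_sum a) A" "(g has_sum b) A"
  shows "((\<lambda>x. f x - g x) has_sum (a - b)) A"
  using has_sum_add[OF assms(1) has_sum_uminus[of g A "- b", simplified, THEN iffD2, OF assms(2)]] by simp

lemma has_sum_sum:
  fixes f :: "'i \<Rightarrow> 'a \<Rightarrow> 'b::topological_comm_monoid_add"
  assumes "finite I" "\<And>i. i \<in> I \<Longrightarrow> (f i has_sum s i) A"
  shows "((\<lambda>x. \<Sum>i\<in>I. f i x) has_sum (\<Sum>i\<in>I. s i)) A"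
  using assms by (induction I rule: finite_induct) (auto intro: has_sum_add)

definition psum :: "(('n::finite \<Rightarrow> nat) \<Rightarrow> complex) \<Rightarrow> complex^'n \<Rightarrow> complex" where
  "psum c z = (\<Sum>\<^sub>\<infinity>\<alpha>. c \<alpha> * mpow z \<alpha>)"

definition ps_abs_conv :: "(('n::finite \<Rightarrow> nat) \<Rightarrow> complex) \<Rightarrow> real \<Rightarrow> bool" where
  "ps_abs_conv c e \<longleftrightarrow>
     (\<forall>\<rho>. 0 \<le> \<rho> \<longrightarrow> \<rho> < e \<longrightarrow> (\<lambda>\<alpha>. norm (c \<alpha>) * \<rho> ^ mdeg \<alpha>) summable_on UNIV)"

lemma ps_abs_conv_summable_on_norm:
  assumes "ps_abs_conv c e" "supn z < e"
  shows "(\<lambda>\<alpha>. norm (c \<alpha> * mpow z \<alpha>)) summable_on UNIV"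
proof (rule summable_on_comparison_test)
  show "(\<lambda>\<alpha>. norm (c \<alpha>) * supn z ^ mdeg \<alpha>) summable_on UNIV"
    using assms supn_nonneg unfolding ps_abs_conv_def by blast
  show "norm (c \<alpha> * mpow z \<alpha>) \<le> norm (c \<alpha>) * supn z ^ mdeg \<alpha>" for \<alpha>
    by (simp add: norm_mult mult_left_mono norm_mpow_le)
qed auto

lemma has_sum_psum:
  assumes "ps_abs_conv c e" "supn z < e"
  shows "((\<lambda>\<alpha>. c \<alpha> * mpow z \<alpha>) has_sum psum c z) UNIV"
  unfolding psum_def using abs_summable_summable[OF ps_abs_conv_summable_on_norm[OF assms]] by simp

lemma psum_zero: "psum c 0 = c 0"
proof -
  have "((\<lambda>\<alpha>. c \<alpha> * mpow 0 \<alpha>) has_sum c 0) UNIV"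
    by (rule has_sum_finite_neutralI[of "{0}"]) (auto simp: mpow_zero)
  then show ?thesis unfolding psum_def by (rule infsumI)
qed

lemma eventually_infsum_tail_less:
  fixes m :: "'a \<Rightarrow> real"
  assumes "(m has_sum S) UNIV" "\<epsilon> > 0"
  shows "eventually (\<lambda>X. finite X \<and> (\<Sum>\<^sub>\<infinity>x\<in>UNIV - X. m x) < \<epsilon>) (finite_subsets_at_top UNIV)"
proof -
  have "(sum m \<longlongrightarrow> S) (finite_subsets_at_top UNIV)" using assms(1) by (simp add: has_sum_def)
  then have "eventually (\<lambda>X. dist (sum m X) S < \<epsilon>) (finite_subsets_at_top UNIV)"
    using assms(2) tendsto_iff by blast
  moreover have "eventually (\<lambda>X. finite X) (finite_subsets_at_top UNIV)"
    by (rule eventually_finite_subsets_at_top_weakI) auto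
  ultimately show ?thesis
  proof eventually_elim
    case (elim X)
    have "(m has_sum (S - sum m X)) (UNIV - X)"
      by (rule has_sum_Diff[OF assms(1)]) (use elim in auto)
    then have "(\<Sum>\<^sub>\<infinity>x\<in>UNIV - X. m x) = S - sum m X" by (rule infsumI)
    with elim show ?case by (auto simp: dist_real_def)
  qed
qed

lemma uniform_limit_psum:
  assumes "ps_abs_conv c e" "0 \<le> \<rho>" "\<rho> < e" "\<And>t. t \<in> K \<Longrightarrow> supn (\<gamma> t) \<le> \<rho>"
  shows "uniform_limit K (\<lambda>X t. \<Sum>\<alpha>\<in>X. c \<alpha> * mpow (\<gamma> t) \<alpha>) (\<lambda>t. psum c (\<gamma> t))
           (finite_subsets_at_top UNIV)"
  unfolding uniform_limit_iff
proof (intro allI impI)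
  fix \<epsilon> :: real assume "\<epsilon> > 0"
  define m where "m \<alpha> = norm (c \<alpha>) * \<rho> ^ mdeg \<alpha>" for \<alpha>
  have m: "m summable_on UNIV" using assms unfolding ps_abs_conv_def m_def by blast
  from eventually_infsum_tail_less[OF has_sum_infsum[OF m] \<open>\<epsilon> > 0\<close>]
  show "\<forall>\<^sub>F X in finite_subsets_at_top UNIV.
          \<forall>t\<in>K. dist (\<Sum>\<alpha>\<in>X. c \<alpha> * mpow (\<gamma> t) \<alpha>) (psum c (\<gamma> t)) < \<epsilon>"
  proof eventually_elim
    case (elim X)
    show ?case
    proof
      fix t assume t: "t \<in> K"
      have "supn (\<gamma> t) < e" using assms(3) assms(4)[OF t] by linarith
      then have "((\<lambda>\<alpha>. c \<alpha> * mpow (\<gamma> t) \<alpha>) has_sum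
                   (psum c (\<gamma> t) - (\<Sum>\<alpha>\<in>X. c \<alpha> * mpow (\<gamma> t) \<alpha>))) (UNIV - X)"
        by (intro has_sum_Diff has_sum_psum[OF assms(1)]) (use elim in auto)
      moreover have "(m has_sum (\<Sum>\<^sub>\<infinity>x\<in>UNIV - X. m x)) (UNIV - X)"
        using summable_on_subset_banach[OF m, of "UNIV - X"] by simp
      moreover have "norm (c \<alpha> * mpow (\<gamma> t) \<alpha>) \<le> m \<alpha>" for \<alpha>
      proof -
        have "cmod (mpow (\<gamma> t) \<alpha>) \<le> \<rho> ^ mdeg \<alpha>"
          using norm_mpow_le[of "\<gamma> t" \<alpha>] power_mono[OF assms(4)[OF t] supn_nonneg] by (rule order_trans)
        then show ?thesis unfolding m_def norm_mult by (simp add: mult_left_mono)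
      qed
      ultimately have "norm (psum c (\<gamma> t) - (\<Sum>\<alpha>\<in>X. c \<alpha> * mpow (\<gamma> t) \<alpha>)) \<le> (\<Sum>\<^sub>\<infinity>x\<in>UNIV - X. m x)"
        by (rule norm_infsum_le)
      then show "dist (\<Sum>\<alpha>\<in>X. c \<alpha> * mpow (\<gamma> t) \<alpha>) (psum c (\<gamma> t)) < \<epsilon>"
        using elim by (simp add: dist_norm norm_minus_commute)
    qed
  qed
qed

lemma isCont_psum:
  assumes "ps_abs_conv c e" "supn z0 < e"
  shows "isCont (psum c) z0"
proof -
  define \<rho> where "\<rho> = (supn z0 + e) / 2"
  have \<rho>: "supn z0 < \<rho>" "\<rho> < e" "0 \<le> \<rho>" using assms supn_nonneg[of z0] unfolding \<rho>_def by auto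
  have "uniform_limit {z. supn z \<le> \<rho>} (\<lambda>X t. \<Sum>\<alpha>\<in>X. c \<alpha> * mpow t \<alpha>) (psum c)
          (finite_subsets_at_top UNIV)"
    using uniform_limit_psum[OF assms(1) \<rho>(3) \<rho>(2), of "{z. supn z \<le> \<rho>}" "\<lambda>t. t"] by simp
  then have "continuous_on {z. supn z \<le> \<rho>} (psum c)"
    by (rule uniform_limit_theorem[rotated])
       (auto simp: mpow_def intro!: always_eventually continuous_intros)
  then have "continuous_on {z. supn z < \<rho>} (psum c)"
    by (rule continuous_on_subset) auto
  moreover have "open {z::complex^'n. supn z < \<rho>}"
    by (intro open_Collect_less continuous_on_supn continuous_on_const)
  ultimately show ?thesis
    using \<rho>(1) continuous_on_eq_continuous_at by blast
qed

lemma holomorphic_on_psum_line: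
  assumes "ps_abs_conv c e"
  shows "(\<lambda>t. psum c (a + t *s u)) holomorphic_on {t. supn (a + t *s u) < e}"
  unfolding holomorphic_on_def
proof
  fix t0 assume "t0 \<in> {t. supn (a + t *s u) < e}"
  then have t0: "supn (a + t0 *s u) < e" by simp
  define r where "r = (e - supn (a + t0 *s u)) / (2 * (supn u + 1))"
  define \<rho> where "\<rho> = supn (a + t0 *s u) + r * supn u"
  have r: "r > 0" using t0 supn_nonneg[of u] unfolding r_def by auto
  have "r * supn u \<le> (e - supn (a + t0 *s u)) / 2"
    using t0 supn_nonneg[of u] unfolding r_def by (simp add: field_simps)
  then have \<rho>: "0 \<le> \<rho>" "\<rho> < e"
    using t0 r supn_nonneg[of u] supn_nonneg[of "a + t0 *s u"] unfolding \<rho>_def by auto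
  have "supn (a + t *s u) \<le> \<rho>" if "t \<in> cball t0 r" for t
  proof -
    have "a + t *s u = (a + t0 *s u) + (t - t0) *s u"
      by (simp add: algebra_simps vector_sadd_rdistrib)
    then have "supn (a + t *s u) \<le> supn (a + t0 *s u) + cmod (t - t0) * supn u"
      using supn_triangle[of "a + t0 *s u" "(t - t0) *s u"] supn_smult[of "t - t0" u] by simp
    also have "cmod (t - t0) * supn u \<le> r * supn u"
      using that supn_nonneg[of u] by (intro mult_right_mono) (auto simp: dist_norm norm_minus_commute)
    finally show ?thesis unfolding \<rho>_def by simp
  qed
  then have "uniform_limit (cball t0 r) (\<lambda>X t. \<Sum>\<alpha>\<in>X. c \<alpha> * mpow (a + t *s u) \<alpha>)
               (\<lambda>t. psum c (a + t *s u)) (finite_subsets_at_top UNIV)"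
    by (intro uniform_limit_psum[OF assms \<rho>])
  then obtain "(\<lambda>t. psum c (a + t *s u)) holomorphic_on ball t0 r"
    by (rule holomorphic_uniform_limit[rotated])
       (auto simp: mpow_def intro!: always_eventually continuous_intros holomorphic_intros)
  then have "(\<lambda>t. psum c (a + t *s u)) field_differentiable at t0"
    using r by (intro holomorphic_on_imp_differentiable_at[of _ "ball t0 r"]) auto
  then show "(\<lambda>t. psum c (a + t *s u)) field_differentiable at t0 within {t. supn (a + t *s u) < e}"
    using field_differentiable_at_within by blast
qed

section \<open>Partial derivatives of power series\<close>

definition vec_upd :: "complex^'n::finite \<Rightarrow> 'n \<Rightarrow> complex \<Rightarrow> complex^'n" where
  "vec_upd z j t = (\<chi> k. if k = j then t else z $ k)"

definition ps_pderiv :: "'n \<Rightarrow> (('n \<Rightarrow> nat) \<Rightarrow> complex) \<Rightarrow> ('n \<Rightarrow> nat) \<Rightarrow> complex" where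
  "ps_pderiv j c \<beta> = of_nat (\<beta> j + 1) * c (\<beta> + eidx j)"

lemma vec_upd_same [simp]: "vec_upd z j (z $ j) = z"
  unfolding vec_upd_def by (simp add: vec_eq_iff)

lemma vec_upd_nth: "vec_upd z j t $ k = (if k = j then t else z $ k)"
  unfolding vec_upd_def by simp

lemma supn_vec_upd_le: "supn (vec_upd z j t) \<le> supn z + cmod (t - z $ j)"
  unfolding supn_le_iff
proof
  fix k
  have "cmod t \<le> cmod (z $ j) + cmod (t - z $ j)"
    by (metis add.commute diff_add_cancel norm_triangle_ineq)
  then show "cmod (vec_upd z j t $ k) \<le> supn z + cmod (t - z $ j)"
    using norm_nth_le_supn[of z] by (auto simp: vec_upd_nth intro: add_increasing2 order_trans)
qed

lemma mpow_vec_upd: "mpow (vec_upd z j t) \<alpha> = t ^ \<alpha> j * (\<Prod>k\<in>UNIV-{j}. z $ k ^ \<alpha> k)"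
  unfolding mpow_def
  by (subst prod.remove[of UNIV j]) (auto simp: vec_upd_nth intro!: prod.cong)

lemma has_field_derivative_mpow_vec_upd:
  "((\<lambda>t. mpow (vec_upd z j t) \<alpha>) has_field_derivative
      (of_nat (\<alpha> j) * mpow (vec_upd z j t0) (\<alpha> - eidx j))) (at t0)"
proof -
  have "(\<Prod>k\<in>UNIV-{j}. z $ k ^ (\<alpha> - eidx j) k) = (\<Prod>k\<in>UNIV-{j}. z $ k ^ \<alpha> k)"
    by (rule prod.cong[OF refl]) (simp add: eidx_def)
  then have "mpow (vec_upd z j t0) (\<alpha> - eidx j) = t0 ^ (\<alpha> j - 1) * (\<Prod>k\<in>UNIV-{j}. z $ k ^ \<alpha> k)"
    by (simp add: mpow_vec_upd eidx_def)
  then show ?thesis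
    unfolding mpow_vec_upd by (auto intro!: derivative_eq_intros)
qed

lemma Suc_mult_power_le:
  fixes q :: real
  assumes "0 \<le> q" "q < 1"
  shows "real (k + 1) * q ^ k \<le> 1 / (1 - q)"
proof -
  have "real (k + 1) * q ^ k = (\<Sum>i\<le>k. q ^ k)" by simp
  also have "\<dots> \<le> (\<Sum>i\<le>k. q ^ i)"
    using assms by (intro sum_mono power_decreasing) auto
  also have "\<dots> = (1 - q ^ Suc k) / (1 - q)"
    using assms
    by (subst sum_gp_basic[symmetric]) (auto simp: field_simps atMost_atLeast0 lessThan_Suc_atMost)
  also have "\<dots> \<le> 1 / (1 - q)" using assms by (intro divide_right_mono) auto
  finally show ?thesis .
qed

lemma summable_on_add_right_reindex:
  fixes m :: "('n \<Rightarrow> nat) \<Rightarrow> real"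
  assumes "m summable_on UNIV"
  shows "(\<lambda>\<beta>. m (\<beta> + \<gamma>)) summable_on UNIV"
proof -
  have "inj (\<lambda>\<beta>. \<beta> + \<gamma>)" by (auto simp: inj_def)
  then show ?thesis
    using summable_on_reindex[of "\<lambda>\<beta>. \<beta> + \<gamma>" UNIV m] summable_on_subset_banach[OF assms]
    by (simp add: o_def)
qed

lemma ps_abs_conv_pderiv:
  assumes "ps_abs_conv c e"
  shows "ps_abs_conv (ps_pderiv j c) e"
  unfolding ps_abs_conv_def
proof (intro allI impI)
  fix \<rho> :: real assume \<rho>: "0 \<le> \<rho>" "\<rho> < e"
  define \<rho>' where "\<rho>' = (\<rho> + e) / 2"
  define q where "q = \<rho> / \<rho>'"
  have \<rho>': "0 < \<rho>'" "\<rho>' < e" "\<rho> < \<rho>'" using \<rho> unfolding \<rho>'_def by auto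
  have q: "0 \<le> q" "q < 1" using \<rho> \<rho>' unfolding q_def by auto
  define m where "m \<alpha> = norm (c \<alpha>) * \<rho>' ^ mdeg \<alpha>" for \<alpha>
  have "m summable_on UNIV"
    using assms \<rho>' unfolding ps_abs_conv_def m_def by auto
  then have "(\<lambda>\<beta>. m (\<beta> + eidx j) * (1 / (\<rho>' * (1 - q)))) summable_on UNIV"
    by (intro summable_on_cmult_left summable_on_add_right_reindex)
  then show "(\<lambda>\<beta>. norm (ps_pderiv j c \<beta>) * \<rho> ^ mdeg \<beta>) summable_on UNIV"
  proof (rule summable_on_comparison_test)
    fix \<beta> :: "'a \<Rightarrow> nat"
    have "real (\<beta> j + 1) * \<rho> ^ mdeg \<beta> \<le> real (mdeg \<beta> + 1) * \<rho> ^ mdeg \<beta>"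
      using nth_le_mdeg[of \<beta> j] \<rho> by (intro mult_right_mono) auto
    also have "\<dots> = (real (mdeg \<beta> + 1) * q ^ mdeg \<beta>) * \<rho>' ^ mdeg \<beta>"
      using \<rho>' unfolding q_def by (simp add: power_divide)
    also have "\<dots> \<le> (1 / (1 - q)) * \<rho>' ^ mdeg \<beta>"
      using Suc_mult_power_le[OF q] \<rho>' by (intro mult_right_mono) auto
    also have "\<dots> = \<rho>' ^ mdeg (\<beta> + eidx j) * (1 / (\<rho>' * (1 - q)))"
      using \<rho>' q by (simp add: mdeg_add mdeg_eidx field_simps)
    finally have "norm (c (\<beta> + eidx j)) * (real (\<beta> j + 1) * \<rho> ^ mdeg \<beta>) \<le>
        norm (c (\<beta> + eidx j)) * (\<rho>' ^ mdeg (\<beta> + eidx j) * (1 / (\<rho>' * (1 - q))))"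
      by (rule mult_left_mono) simp
    then show "norm (ps_pderiv j c \<beta>) * \<rho> ^ mdeg \<beta> \<le> m (\<beta> + eidx j) * (1 / (\<rho>' * (1 - q)))"
      unfolding ps_pderiv_def m_def norm_mult norm_of_nat by (simp only: mult_ac)
  qed (use \<rho> in auto)
qed

lemma has_sum_psum_pderiv:
  assumes "ps_abs_conv c e" "supn z < e"
  shows "((\<lambda>\<alpha>. c \<alpha> * (of_nat (\<alpha> j) * mpow z (\<alpha> - eidx j))) has_sum psum (ps_pderiv j c) z) UNIV"
proof -
  let ?h = "\<lambda>\<beta>. \<beta> + eidx j"
  let ?g = "\<lambda>\<alpha>. c \<alpha> * (of_nat (\<alpha> j) * mpow z (\<alpha> - eidx j))"
  have inj: "inj ?h" by (auto simp: inj_def)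
  have "((\<lambda>\<beta>. ps_pderiv j c \<beta> * mpow z \<beta>) has_sum psum (ps_pderiv j c) z) UNIV"
    by (rule has_sum_psum[OF ps_abs_conv_pderiv[OF assms(1)] assms(2)])
  also have "(\<lambda>\<beta>. ps_pderiv j c \<beta> * mpow z \<beta>) = ?g \<circ> ?h"
    by (rule ext) (simp add: ps_pderiv_def eidx_def)
  finally have "(?g has_sum psum (ps_pderiv j c) z) (range ?h)"
    using has_sum_reindex[OF inj] by blast
  moreover have "?g \<alpha> = 0" if "\<alpha> \<notin> range ?h" for \<alpha>
  proof -
    have "\<alpha> j = 0"
    proof (rule ccontr)
      assume "\<alpha> j \<noteq> 0"
      then have "\<alpha> = ?h (\<alpha> - eidx j)" by (auto simp: fun_eq_iff eidx_def)
      with that show False by blast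
    qed
    then show ?thesis by simp
  qed
  ultimately show ?thesis
    by (subst (asm) has_sum_cong_neutral[where T=UNIV and g="?g"]) auto
qed

lemma has_field_derivative_psum_vec_upd:
  assumes "ps_abs_conv c e" "supn z < e"
  shows "((\<lambda>t. psum c (vec_upd z j t)) has_field_derivative psum (ps_pderiv j c) z) (at (z $ j))"
proof -
  define r where "r = (e - supn z) / 2"
  have r: "r > 0" using assms unfolding r_def by auto
  have \<rho>: "0 \<le> supn z + r" "supn z + r < e"
    using r assms(2) supn_nonneg[of z] unfolding r_def by (auto simp: field_simps)
  have "supn (vec_upd z j t) \<le> supn z + r" if "t \<in> cball (z $ j) r" for t
    using supn_vec_upd_le[of z j t] that by (auto simp: dist_norm norm_minus_commute)
  then have ul: "uniform_limit (cball (z $ j) r) (\<lambda>X t. \<Sum>\<alpha>\<in>X. c \<alpha> * mpow (vec_upd z j t) \<alpha>)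
                   (\<lambda>t. psum c (vec_upd z j t)) (finite_subsets_at_top UNIV)"
    by (intro uniform_limit_psum[OF assms(1) \<rho>])
  have der: "((\<lambda>t. \<Sum>\<alpha>\<in>X. c \<alpha> * mpow (vec_upd z j t) \<alpha>) has_field_derivative
              (\<Sum>\<alpha>\<in>X. c \<alpha> * (of_nat (\<alpha> j) * mpow (vec_upd z j w) (\<alpha> - eidx j)))) (at w)" for X w
    by (intro DERIV_sum DERIV_cmult has_field_derivative_mpow_vec_upd)
  obtain g' where g': "\<And>w. w \<in> ball (z $ j) r \<Longrightarrow>
      ((\<lambda>t. psum c (vec_upd z j t)) has_field_derivative (g' w)) (at w) \<and>
      ((\<lambda>X. \<Sum>\<alpha>\<in>X. c \<alpha> * (of_nat (\<alpha> j) * mpow (vec_upd z j w) (\<alpha> - eidx j))) \<longlongrightarrow> g' w)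
        (finite_subsets_at_top UNIV)"
    by (rule has_complex_derivative_uniform_limit[OF _ ul _ r])
       (auto intro!: always_eventually der continuous_at_imp_continuous_on DERIV_isCont)
  have "z $ j \<in> ball (z $ j) r" using r by simp
  note g'z = g'[OF this, unfolded vec_upd_same]
  have "g' (z $ j) = psum (ps_pderiv j c) z"
    using has_sum_psum_pderiv[OF assms, of j] g'z unfolding has_sum_def
    by (intro tendsto_unique[of "finite_subsets_at_top UNIV"]) auto
  with g'z show ?thesis by simp
qed

lemma foldr_pd_psum:
  assumes "ps_abs_conv c e" "\<And>z. supn z < e \<Longrightarrow> g z = psum c z"
  shows "ps_abs_conv (foldr ps_pderiv L c) e \<and>
         (\<forall>z. supn z < e \<longrightarrow> foldr pd L g z = psum (foldr ps_pderiv L c) z)"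
proof (induction L)
  case Nil
  then show ?case using assms by simp
next
  case (Cons j L)
  let ?c = "foldr ps_pderiv L c"
  have conv: "ps_abs_conv ?c e" and eq: "\<And>z. supn z < e \<Longrightarrow> foldr pd L g z = psum ?c z"
    using Cons by auto
  have "foldr pd (j # L) g z = psum (ps_pderiv j ?c) z" if z: "supn z < e" for z
  proof -
    have "eventually (\<lambda>t. t \<in> ball (z $ j) (e - supn z)) (nhds (z $ j))"
      by (rule eventually_nhds_in_open) (use z in auto)
    then have "eventually (\<lambda>t. foldr pd L g (vec_upd z j t) = psum ?c (vec_upd z j t)) (nhds (z $ j))"
      by (rule eventually_mono)
         (auto intro!: eq le_less_trans[OF supn_vec_upd_le] simp: dist_norm norm_minus_commute)
    then have "deriv (\<lambda>t. foldr pd L g (vec_upd z j t)) (z $ j) = deriv (\<lambda>t. psum ?c (vec_upd z j t)) (z $ j)"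
      by (rule deriv_cong_ev) simp
    also have "\<dots> = psum (ps_pderiv j ?c) z"
      by (rule DERIV_imp_deriv[OF has_field_derivative_psum_vec_upd[OF conv z]])
    finally show ?thesis by (simp add: pd_def vec_upd_def)
  qed
  then show ?case using ps_abs_conv_pderiv[OF conv, of j] by simp
qed

lemma foldr_ps_pderiv_eq:
  fixes \<beta> :: "'n::finite \<Rightarrow> nat"
  shows "foldr ps_pderiv L c \<beta> * (\<Prod>k\<in>UNIV. fact (\<beta> k)) =
     c (\<beta> + count_list L) * (\<Prod>k\<in>UNIV. fact (\<beta> k + count_list L k))"
proof (induction L arbitrary: \<beta>)
  case Nil
  then show ?case by (simp add: zero_fun_def[symmetric])
next
  case (Cons j L)
  have fact_Suc: "(\<Prod>k\<in>UNIV. (fact ((\<beta> + eidx j) k) :: complex)) =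
                  of_nat (\<beta> j + 1) * (\<Prod>k\<in>UNIV. fact (\<beta> k))"
  proof -
    have "(\<Prod>k\<in>UNIV. (fact ((\<beta> + eidx j) k) :: complex)) =
          (\<Prod>k\<in>UNIV. (if k = j then of_nat (\<beta> k + 1) else 1) * fact (\<beta> k))"
      by (rule prod.cong[OF refl]) (simp add: eidx_def)
    also have "\<dots> = of_nat (\<beta> j + 1) * (\<Prod>k\<in>UNIV. fact (\<beta> k))"
      by (simp add: prod.distrib prod.delta)
    finally show ?thesis .
  qed
  let ?X = "foldr ps_pderiv L c"
  have "foldr ps_pderiv (j # L) c \<beta> * (\<Prod>k\<in>UNIV. fact (\<beta> k)) =
        ?X (\<beta> + eidx j) * (\<Prod>k\<in>UNIV. fact ((\<beta> + eidx j) k))"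
    unfolding foldr_Cons o_apply ps_pderiv_def[of j ?X \<beta>] fact_Suc by (simp only: mult_ac)
  also have "\<dots> = c (\<beta> + eidx j + count_list L) * (\<Prod>k\<in>UNIV. fact ((\<beta> + eidx j) k + count_list L k))"
    by (rule Cons.IH)
  also have "\<beta> + eidx j + count_list L = \<beta> + count_list (j # L)"
    by (auto simp: eidx_def fun_eq_iff)
  also have "(\<lambda>k. (\<beta> + eidx j) k + count_list L k) = (\<lambda>k. \<beta> k + count_list (j # L) k)"
    by (auto simp: eidx_def fun_eq_iff)
  finally show ?case .
qed

lemma ex_count_list_eq: "\<exists>L. count_list L = (\<alpha>::'n::finite \<Rightarrow> nat)"
proof -
  obtain xs :: "'n list" where xs: "distinct xs" "set xs = UNIV"
    using finite_distinct_list[of "UNIV :: 'n set"] by auto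
  have [simp]: "count_list (replicate n y) k = (if y = k then n else 0)" for n y k
    by (induction n) auto
  have "distinct ys \<Longrightarrow>
      count_list (concat (map (\<lambda>j. replicate (\<alpha> j) j) ys)) k = (if k \<in> set ys then \<alpha> k else 0)"
    for ys :: "'n list" and k
    by (induction ys) auto
  then show ?thesis
    using xs by (intro exI[of _ "concat (map (\<lambda>j. replicate (\<alpha> j) j) xs)"]) auto
qed

lemma pdiff_psum:
  assumes "ps_abs_conv c e" "0 < e" "\<And>z. supn z < e \<Longrightarrow> g z = psum c z"
  shows "pdiff \<alpha> g 0 = c \<alpha> * of_real (mfact \<alpha>)"
proof -
  define L where "L = (SOME L. \<forall>j. count_list L j = \<alpha> j)"
  have L: "count_list L = \<alpha>"
    using someI_ex[of "\<lambda>L. \<forall>j. count_list L j = \<alpha> j"] ex_count_list_eq[of \<alpha>]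
    unfolding L_def by (auto simp: fun_eq_iff)
  have "pdiff \<alpha> g 0 = psum (foldr ps_pderiv L c) 0"
    using foldr_pd_psum[OF assms(1,3), of L] assms(2) by (simp add: pdiff_def L_def)
  also have "\<dots> = c \<alpha> * (\<Prod>k\<in>UNIV. fact (\<alpha> k))"
    using foldr_ps_pderiv_eq[of L c 0] by (simp add: psum_zero L)
  finally show ?thesis
    by (simp add: mfact_def of_real_prod)
qed

lemma analytic_vec_obtains_ps:
  fixes F :: "complex^'n::finite \<Rightarrow> complex^'m::finite"
  assumes "analytic_vec S F" "w \<in> S"
  obtains e and c :: "'m \<Rightarrow> ('n \<Rightarrow> nat) \<Rightarrow> complex"
  where "e > 0" "\<And>i. ps_abs_conv (c i) e"
    "\<And>i z. supn (z - w) < e \<Longrightarrow> F z $ i = psum (c i) (z - w)"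
proof -
  obtain e cv where e: "e > 0" and cv: "\<And>z. supn (z - w) < e \<Longrightarrow>
      ((\<lambda>\<alpha>. \<chi> i. mpow (z - w) \<alpha> * cv \<alpha> $ i) has_sum F z) UNIV"
    using assms unfolding analytic_vec_def by blast
  define c where "c i \<alpha> = cv \<alpha> $ i" for i \<alpha>
  have hs: "((\<lambda>\<alpha>. c i \<alpha> * mpow (z - w) \<alpha>) has_sum F z $ i) UNIV" if "supn (z - w) < e" for i z
    using has_sum_bounded_linear[OF bounded_linear_vec_nth[of i] cv[OF that]]
    by (simp add: c_def mult.commute)
  have "ps_abs_conv (c i) e" for i
    unfolding ps_abs_conv_def
  proof (intro allI impI)
    fix \<rho> :: real assume \<rho>: "0 \<le> \<rho>" "\<rho> < e"
    define z where "z = w + (\<chi> k. complex_of_real \<rho>)"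
    have zw: "z - w = (\<chi> k. complex_of_real \<rho>)" unfolding z_def by simp
    have "supn (z - w) < e" unfolding zw supn_const using \<rho> by simp
    from hs[OF this, of i] have "(\<lambda>\<alpha>. c i \<alpha> * mpow (z - w) \<alpha>) summable_on UNIV"
      by (rule has_sum_imp_summable)
    then have "(\<lambda>\<alpha>. norm (c i \<alpha> * mpow (z - w) \<alpha>)) summable_on UNIV"
      using summable_on_iff_abs_summable_on_complex[of "\<lambda>\<alpha>. c i \<alpha> * mpow (z - w) \<alpha>" UNIV] by simp
    moreover have "norm (c i \<alpha> * mpow (z - w) \<alpha>) = norm (c i \<alpha>) * \<rho> ^ mdeg \<alpha>" for \<alpha>
      unfolding zw mpow_const norm_mult norm_power using \<rho> by simp
    ultimately show "(\<lambda>\<alpha>. norm (c i \<alpha>) * \<rho> ^ mdeg \<alpha>) summable_on UNIV" by simp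
  qed
  moreover have "F z $ i = psum (c i) (z - w)" if "supn (z - w) < e" for i z
    using hs[OF that, of i] unfolding psum_def by (simp add: infsumI)
  ultimately show ?thesis using that e by blast
qed

section \<open>Homogeneous parts and Cauchy estimates\<close>

definition hom_part :: "(('n::finite \<Rightarrow> nat) \<Rightarrow> complex) \<Rightarrow> complex^'n \<Rightarrow> nat \<Rightarrow> complex" where
  "hom_part c w k = (\<Sum>\<alpha>\<in>{\<alpha>. mdeg \<alpha> = k}. c \<alpha> * mpow w \<alpha>)"

lemma finite_mdeg_eq: "finite {\<alpha>::'n::finite \<Rightarrow> nat. mdeg \<alpha> = k}"
  by (rule finite_subset[OF _ finite_mdeg_le[of k]]) auto

lemma has_sum_imp_sums_mdeg:
  fixes f :: "('n::finite \<Rightarrow> nat) \<Rightarrow> complex"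
  assumes "(f has_sum S) UNIV"
  shows "(\<lambda>k. \<Sum>\<alpha>\<in>{\<alpha>. mdeg \<alpha> = k}. f \<alpha>) sums S"
proof -
  let ?h = "\<lambda>\<alpha>::'n\<Rightarrow>nat. (mdeg \<alpha>, \<alpha>)"
  have "inj ?h" by (auto simp: inj_def)
  moreover have "range ?h = Sigma UNIV (\<lambda>k. {\<alpha>. mdeg \<alpha> = k})" by auto
  ultimately have "((\<lambda>(k, \<alpha>). f \<alpha>) has_sum S) (Sigma UNIV (\<lambda>k. {\<alpha>. mdeg \<alpha> = k}))"
    using assms has_sum_reindex[of ?h UNIV "\<lambda>(k, \<alpha>). f \<alpha>" S] by (simp add: o_def)
  then have "((\<lambda>k. \<Sum>\<alpha>\<in>{\<alpha>. mdeg \<alpha> = k}. f \<alpha>) has_sum S) UNIV"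
    by (rule has_sum_Sigma') (simp add: finite_mdeg_eq)
  then show ?thesis by (rule has_sum_imp_sums)
qed

lemma sum_roots_of_unity:
  fixes d :: int and m :: nat
  assumes "0 < m" "\<bar>d\<bar> < int m"
  shows "(\<Sum>l<m. exp (2 * of_real pi * \<i> * of_int d * of_nat l / of_nat m)) =
           (if d = 0 then of_nat m else 0)"
proof (cases "d = 0")
  case False
  define z where "z = exp (2 * of_real pi * \<i> * of_int d / of_nat m)"
  have zl: "exp (2 * of_real pi * \<i> * of_int d * of_nat l / of_nat m) = z ^ l" for l
    unfolding z_def exp_of_nat_mult[symmetric] by (simp add: mult_ac)
  have "z ^ m = exp (of_int d * (2 * of_real pi * \<i>))"
    unfolding z_def exp_of_nat_mult[symmetric] using assms(1) by (simp add: field_simps)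
  then have zm: "z ^ m = 1" by (auto simp: exp_eq_1 intro!: exI[of _ d])
  have z1: "z \<noteq> 1"
  proof
    assume "z = 1"
    then obtain n :: int where "Im (2 * of_real pi * \<i> * of_int d / of_nat m) = of_int (2 * n) * pi"
      unfolding z_def exp_eq_1 by blast
    then have "real_of_int d = real_of_int n * real m" using assms(1) pi_gt_zero
      by (simp add: field_simps)
    then have "d = n * int m" by (metis of_int_eq_iff of_int_mult of_int_of_nat_eq)
    with False assms(2) show False
      by (cases "n = 0") (auto simp: abs_mult dest: mult_strict_right_mono)
  qed
  show ?thesis using zm z1 False by (simp only: zl) (simp add: sum_gp_strict)
qed simp

lemma sum_PiE_prod_roots_of_unity:
  fixes d :: "'n::finite \<Rightarrow> int" and m :: nat
  assumes "0 < m" "\<And>j. \<bar>d j\<bar> < int m"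
  shows "(\<Sum>l\<in>PiE UNIV (\<lambda>_. {..<m}).
            \<Prod>j\<in>UNIV. exp (2 * of_real pi * \<i> * of_int (d j) * of_nat (l j) / of_nat m))
         = (if d = 0 then of_nat m ^ CARD('n) else 0)"
proof -
  have "(\<Sum>l\<in>PiE UNIV (\<lambda>_. {..<m}).
            \<Prod>j\<in>UNIV. exp (2 * of_real pi * \<i> * of_int (d j) * of_nat (l j) / of_nat m))
        = (\<Prod>j\<in>UNIV. \<Sum>l<m. exp (2 * of_real pi * \<i> * of_int (d j) * of_nat l / of_nat m))"
    by (rule prod_sum_PiE[symmetric]) auto
  also have "\<dots> = (\<Prod>j\<in>UNIV. if d j = 0 then of_nat m else 0)"
    using sum_roots_of_unity[OF assms] by simp
  also have "\<dots> = (if d = 0 then of_nat m ^ CARD('n) else 0)"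
    by (auto simp: fun_eq_iff prod_zero_iff)
  finally show ?thesis .
qed

text \<open>Averaging the homogeneous part of degree \<open>mdeg \<alpha>\<close> over the torus points
  \<open>\<rho> \<omega>\<^sup>l\<close>, \<open>\<omega>\<close> an \<open>m\<close>-th root of unity, against the character \<open>\<omega>\<^sup>-\<^sup>\<alpha>\<^sup>l\<close>
  isolates the single coefficient \<open>c \<alpha>\<close>.\<close>

lemma sum_torus_hom_part:
  fixes c :: "('n::finite \<Rightarrow> nat) \<Rightarrow> complex" and \<alpha> :: "'n \<Rightarrow> nat" and \<rho> :: real
  defines "m \<equiv> mdeg \<alpha> + 1"
  defines "\<omega> \<equiv> \<lambda>x. exp (2 * of_real pi * \<i> * x / of_nat m)"
  shows "(\<Sum>l\<in>PiE UNIV (\<lambda>_. {..<m}). (\<Prod>j\<in>UNIV. \<omega> (- of_nat (\<alpha> j * l j))) *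
            hom_part c (\<chi> j. of_real \<rho> * \<omega> (of_nat (l j))) (mdeg \<alpha>))
         = of_nat m ^ CARD('n) * of_real \<rho> ^ mdeg \<alpha> * c \<alpha>"
proof -
  define k where "k = mdeg \<alpha>"
  define G where "G = PiE (UNIV::'n set) (\<lambda>_. {..<m})"
  define w where "w l = (\<chi> j. of_real \<rho> * \<omega> (of_nat (l j)))" for l :: "'n \<Rightarrow> nat"
  define E where "E l = (\<Prod>j\<in>UNIV. \<omega> (- of_nat (\<alpha> j * l j)))" for l :: "'n \<Rightarrow> nat"
  define d where "d \<beta> j = int (\<beta> j) - int (\<alpha> j)" for \<beta> :: "'n \<Rightarrow> nat" and j
  have \<omega>_add: "\<omega> a * \<omega> b = \<omega> (a + b)" for a b
    unfolding \<omega>_def by (simp add: exp_add[symmetric] add_divide_distrib ring_distribs)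
  have \<omega>_pow: "\<omega> a ^ n = \<omega> (of_nat n * a)" for a n
    unfolding \<omega>_def exp_of_nat_mult[symmetric] by (simp add: mult_ac)
  have character: "E l * mpow (w l) \<beta> =
      of_real \<rho> ^ mdeg \<beta> * (\<Prod>j\<in>UNIV. \<omega> (of_int (d \<beta> j) * of_nat (l j)))" for l \<beta>
  proof -
    have "E l * mpow (w l) \<beta> =
          of_real \<rho> ^ mdeg \<beta> * (\<Prod>j\<in>UNIV. \<omega> (- of_nat (\<alpha> j * l j)) * \<omega> (of_nat (\<beta> j) * of_nat (l j)))"
      unfolding E_def mpow_def w_def mdeg_def
      by (simp add: power_mult_distrib \<omega>_pow prod.distrib power_sum mult_ac)
    also have "\<dots> = of_real \<rho> ^ mdeg \<beta> * (\<Prod>j\<in>UNIV. \<omega> (of_int (d \<beta> j) * of_nat (l j)))"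
      by (simp add: \<omega>_add d_def algebra_simps)
    finally show ?thesis .
  qed
  have orthogonality: "(\<Sum>l\<in>G. \<Prod>j\<in>UNIV. \<omega> (of_int (d \<beta> j) * of_nat (l j))) =
                   (if \<beta> = \<alpha> then of_nat m ^ CARD('n) else 0)" if "mdeg \<beta> = k" for \<beta>
  proof -
    have "\<bar>d \<beta> j\<bar> < int m" for j
      using that nth_le_mdeg[of \<beta> j] nth_le_mdeg[of \<alpha> j] unfolding d_def m_def k_def by linarith
    moreover have "d \<beta> = 0 \<longleftrightarrow> \<beta> = \<alpha>"
      unfolding d_def by (auto simp: fun_eq_iff)
    ultimately show ?thesis
      using sum_PiE_prod_roots_of_unity[of m "d \<beta>"] unfolding G_def \<omega>_def m_def by (simp add: mult.assoc)
  qed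
  have "(\<Sum>l\<in>G. E l * hom_part c (w l) k) =
        (\<Sum>\<beta>\<in>{\<beta>. mdeg \<beta> = k}. \<Sum>l\<in>G. c \<beta> * (E l * mpow (w l) \<beta>))"
    unfolding hom_part_def sum_distrib_left by (subst sum.swap) (simp add: mult_ac)
  also have "\<dots> = (\<Sum>\<beta>\<in>{\<beta>. mdeg \<beta> = k}.
                      c \<beta> * of_real \<rho> ^ k * (\<Sum>l\<in>G. \<Prod>j\<in>UNIV. \<omega> (of_int (d \<beta> j) * of_nat (l j))))"
    by (rule sum.cong[OF refl]) (simp add: character sum_distrib_left mult_ac)
  also have "\<dots> = (\<Sum>\<beta>\<in>{\<beta>. mdeg \<beta> = k}. if \<beta> = \<alpha> then c \<beta> * of_real \<rho> ^ k * of_nat m ^ CARD('n) else 0)"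
    by (rule sum.cong[OF refl]) (simp add: orthogonality)
  also have "\<dots> = of_nat m ^ CARD('n) * of_real \<rho> ^ k * c \<alpha>"
    by (simp add: k_def finite_mdeg_eq)
  finally show ?thesis unfolding G_def E_def w_def k_def .
qed

context
  fixes F :: "complex^'n::finite \<Rightarrow> complex^'m::finite"
  assumes F_analytic: "analytic_vec polydisc1 F"
begin

lemma analytic_vec_continuous_on: "continuous_on polydisc1 F"
proof -
  have "isCont (\<lambda>z. F z $ i) p" if p: "p \<in> polydisc1" for p i
  proof -
    obtain e and c :: "'m \<Rightarrow> ('n \<Rightarrow> nat) \<Rightarrow> complex"
      where e: "e > 0" and conv: "\<And>i. ps_abs_conv (c i) e"
        and eq: "\<And>i z. supn (z - p) < e \<Longrightarrow> F z $ i = psum (c i) (z - p)"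
      using analytic_vec_obtains_ps[OF F_analytic p] by blast
    have "isCont (psum (c i)) (p - p)"
      using isCont_psum[OF conv] e by simp
    then have cont: "isCont (\<lambda>z. psum (c i) (z - p)) p"
      by (rule isCont_o2[rotated]) simp
    have "eventually (\<lambda>z. z \<in> ball p e) (nhds p)"
      by (rule eventually_nhds_in_open) (use e in auto)
    then have "eventually (\<lambda>z. F z $ i = psum (c i) (z - p)) (nhds p)"
      by (rule eventually_mono)
         (auto intro!: eq le_less_trans[OF supn_le_norm] simp: dist_norm norm_minus_commute)
    from cont isCont_cong[OF this] show ?thesis by simp
  qed
  then have "continuous_on polydisc1 (\<lambda>z. \<chi> i. F z $ i)"
    by (intro continuous_on_vec_lambda continuous_at_imp_continuous_on) auto
  then show ?thesis by simp
qed

lemma analytic_vec_bounded: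
  assumes "R < 1"
  obtains M where "M \<ge> 0" "\<And>z i. supn z \<le> R \<Longrightarrow> cmod (F z $ i) \<le> M"
proof -
  have "{z. supn z \<le> R} \<subseteq> polydisc1"
    using assms by (auto simp: polydisc1_iff)
  with analytic_vec_continuous_on have "continuous_on {z. supn z \<le> R} F"
    by (rule continuous_on_subset)
  then obtain B where B: "B \<ge> 0" "\<And>z. z \<in> {z. supn z \<le> R} \<Longrightarrow> norm (F z) \<le> B"
    by (rule continuous_on_compact_bound[OF compact_supn_le]) auto
  show ?thesis
  proof (rule that[OF B(1)])
    fix z :: "complex^'n" and i assume "supn z \<le> R"
    then show "cmod (F z $ i) \<le> B"
      using B(2)[of z] Finite_Cartesian_Product.norm_nth_le[of "F z" i] by simp
  qed
qed

lemma analytic_vec_holomorphic_on_line: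
  "(\<lambda>t. F (t *s w) $ i) holomorphic_on {t. cmod t * supn w < 1}"
  unfolding holomorphic_on_def
proof
  fix t0 assume t0: "t0 \<in> {t. cmod t * supn w < 1}"
  define p where "p = t0 *s w"
  have p: "p \<in> polydisc1" using t0 unfolding polydisc1_iff p_def supn_smult by simp
  obtain e and c :: "'m \<Rightarrow> ('n \<Rightarrow> nat) \<Rightarrow> complex"
    where e: "e > 0" and conv: "\<And>i. ps_abs_conv (c i) e"
      and eq: "\<And>i z. supn (z - p) < e \<Longrightarrow> F z $ i = psum (c i) (z - p)"
    using analytic_vec_obtains_ps[OF F_analytic p] by blast
  define \<delta> where "\<delta> = e / (supn w + 1)"
  have \<delta>: "\<delta> > 0" using e supn_nonneg[of w] unfolding \<delta>_def by simp
  have near: "supn (-p + t *s w) < e" if "t \<in> ball t0 \<delta>" for t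
  proof -
    have "-p + t *s w = (t - t0) *s w" unfolding p_def by (simp add: vec_eq_iff algebra_simps)
    then have "supn (-p + t *s w) = cmod (t - t0) * supn w" by (simp only: supn_smult)
    also have "\<dots> \<le> \<delta> * supn w"
      using that supn_nonneg[of w] by (intro mult_right_mono) (auto simp: dist_norm norm_minus_commute)
    also have "\<delta> * supn w < e"
      unfolding \<delta>_def using e supn_nonneg[of w] by (simp add: field_simps)
    finally show ?thesis .
  qed
  have "(\<lambda>t. psum (c i) (-p + t *s w)) holomorphic_on {t. supn (-p + t *s w) < e}"
    by (rule holomorphic_on_psum_line[OF conv])
  then have "(\<lambda>t. psum (c i) (-p + t *s w)) holomorphic_on ball t0 \<delta>"
    by (rule holomorphic_on_subset) (use near in auto)
  then have "(\<lambda>t. psum (c i) (-p + t *s w)) field_differentiable at t0"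
    using \<delta> by (intro holomorphic_on_imp_differentiable_at[of _ "ball t0 \<delta>"]) auto
  then obtain D where D: "((\<lambda>t. psum (c i) (-p + t *s w)) has_field_derivative D) (at t0)"
    unfolding field_differentiable_def by blast
  have "((\<lambda>t. F (t *s w) $ i) has_field_derivative D) (at t0)"
  proof (rule has_field_derivative_transform_within_open[OF D, of "ball t0 \<delta>"])
    fix t assume "t \<in> ball t0 \<delta>"
    with near have "supn (t *s w - p) < e" by simp
    then show "psum (c i) (-p + t *s w) = F (t *s w) $ i" by (simp add: eq)
  qed (use \<delta> in auto)
  then show "(\<lambda>t. F (t *s w) $ i) field_differentiable at t0 within {t. cmod t * supn w < 1}"
    using field_differentiable_at_within field_differentiable_def by blast
qed

context
  fixes e0 :: real and c :: "'m \<Rightarrow> ('n \<Rightarrow> nat) \<Rightarrow> complex"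
  assumes e0: "e0 > 0" and c_conv: "\<And>i. ps_abs_conv (c i) e0"
    and F_eq_psum: "\<And>i z. supn z < e0 \<Longrightarrow> F z $ i = psum (c i) z"
begin

lemma sums_hom_part_line:
  assumes "cmod t * supn w < e0"
  shows "(\<lambda>k. hom_part (c i) w k * t ^ k) sums (F (t *s w) $ i)"
proof -
  have s: "supn (t *s w) < e0" using assms by (simp add: supn_smult)
  have "(\<lambda>k. \<Sum>\<alpha>\<in>{\<alpha>. mdeg \<alpha> = k}. c i \<alpha> * mpow (t *s w) \<alpha>) sums psum (c i) (t *s w)"
    by (rule has_sum_imp_sums_mdeg[OF has_sum_psum[OF c_conv s]])
  moreover have "(\<Sum>\<alpha>\<in>{\<alpha>. mdeg \<alpha> = k}. c i \<alpha> * mpow (t *s w) \<alpha>) = hom_part (c i) w k * t ^ k" for k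
    unfolding hom_part_def sum_distrib_right by (rule sum.cong[OF refl]) (simp add: mpow_smult)
  ultimately show ?thesis using F_eq_psum[OF s] by simp
qed

lemma has_fps_expansion_line: "(\<lambda>t. F (t *s w) $ i) has_fps_expansion Abs_fps (hom_part (c i) w)"
  unfolding has_fps_expansion_def
proof
  define \<delta> where "\<delta> = e0 / (supn w + 1)"
  have \<delta>: "\<delta> > 0" using e0 supn_nonneg[of w] unfolding \<delta>_def by simp
  have small: "cmod t * supn w < e0" if "cmod t < \<delta>" for t
  proof -
    have "cmod t * supn w \<le> \<delta> * supn w" using that supn_nonneg[of w] by (intro mult_right_mono) auto
    also have "\<delta> * supn w < e0" unfolding \<delta>_def using e0 supn_nonneg[of w] by (simp add: field_simps)
    finally show ?thesis .
  qed
  have "cmod (complex_of_real (\<delta> / 2)) < \<delta>" using \<delta> by simp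
  then have "summable (\<lambda>k. hom_part (c i) w k * complex_of_real (\<delta> / 2) ^ k)"
    using sums_hom_part_line[OF small] sums_summable by blast
  then have "conv_radius (hom_part (c i) w) \<ge> norm (complex_of_real (\<delta> / 2))"
    by (rule conv_radius_geI)
  then show "0 < fps_conv_radius (Abs_fps (hom_part (c i) w))"
    unfolding fps_conv_radius_def using \<delta> by (auto simp: less_le_trans[of 0 "ereal (\<delta> / 2)"])
  have "eventually (\<lambda>t. t \<in> ball 0 \<delta>) (nhds (0::complex))"
    by (rule eventually_nhds_in_open) (use \<delta> in auto)
  then show "\<forall>\<^sub>F t in nhds 0. eval_fps (Abs_fps (hom_part (c i) w)) t = F (t *s w) $ i"
    by (rule eventually_mono) (use sums_hom_part_line[OF small] in \<open>auto simp: eval_fps_def sums_iff\<close>)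
qed

lemma hom_part_eq_deriv_line: "hom_part (c i) w k = (deriv ^^ k) (\<lambda>t. F (t *s w) $ i) 0 / fact k"
  using fps_nth_fps_expansion[OF has_fps_expansion_line[of w i], of k] by simp

lemma norm_hom_part_le:
  assumes "0 < \<rho>" "\<rho> < R" "R < 1" "\<And>z. supn z \<le> R \<Longrightarrow> cmod (F z $ i) \<le> M" "supn w = \<rho>"
  shows "cmod (hom_part (c i) w k) \<le> M * (\<rho> / R) ^ k"
proof -
  let ?\<phi> = "\<lambda>t. F (t *s w) $ i"
  have sub: "cball 0 (R / \<rho>) \<subseteq> {t. cmod t * supn w < 1}"
    using assms by (auto simp: field_simps)
  have "norm ((deriv ^^ k) ?\<phi> 0) \<le> fact k * M / (R / \<rho>) ^ k"
  proof (rule Cauchy_inequality)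
    show "?\<phi> holomorphic_on ball 0 (R / \<rho>)"
      using holomorphic_on_subset[OF analytic_vec_holomorphic_on_line] sub ball_subset_cball by blast
    show "continuous_on (cball 0 (R / \<rho>)) ?\<phi>"
      using continuous_on_subset[OF holomorphic_on_imp_continuous_on[OF analytic_vec_holomorphic_on_line] sub] .
    show "norm (?\<phi> x) \<le> M" if "norm (0 - x) = R / \<rho>" for x
      using that assms by (intro assms(4)) (simp add: supn_smult)
  qed (use assms in simp)
  then have "cmod (hom_part (c i) w k) \<le> (fact k * M / (R / \<rho>) ^ k) / fact k"
    unfolding hom_part_eq_deriv_line norm_divide norm_fact by (intro divide_right_mono) auto
  also have "\<dots> = M * (\<rho> / R) ^ k" by (simp add: power_divide field_simps)
  finally show ?thesis .
qed

lemma norm_ps_coeff_le: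
  assumes R: "0 < R" "R < 1" and M: "\<And>z. supn z \<le> R \<Longrightarrow> cmod (F z $ i) \<le> M"
  shows "cmod (c i \<alpha>) \<le> M / R ^ mdeg \<alpha>"
proof -
  define k where "k = mdeg \<alpha>"
  define m where "m = k + 1"
  define \<rho> where "\<rho> = R / 2"
  define \<omega> where "\<omega> x = exp (2 * of_real pi * \<i> * x / of_nat m)" for x :: complex
  have \<rho>: "0 < \<rho>" "\<rho> < R" using R unfolding \<rho>_def by auto
  have norm_\<omega>: "cmod (\<omega> (of_real r)) = 1" for r
    unfolding \<omega>_def by (simp add: norm_exp_eq_Re)
  have norm_character: "cmod (\<Prod>j\<in>UNIV. \<omega> (- of_nat (\<alpha> j * l j))) = 1" for l
    unfolding prod_norm[symmetric] using norm_\<omega>[of "- real (\<alpha> j * l j)" for j] by simp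
  have supn_torus: "supn (\<chi> j. of_real \<rho> * \<omega> (of_nat (l j))) = \<rho>" for l
  proof -
    obtain j where "supn (\<chi> j. of_real \<rho> * \<omega> (of_nat (l j))) = cmod ((\<chi> j. of_real \<rho> * \<omega> (of_nat (l j))) $ j)"
      by (rule supn_eq_norm_nth)
    then show ?thesis using \<rho> norm_\<omega>[of "real (l j)"] by (simp add: norm_mult)
  qed
  have term_bound: "cmod ((\<Prod>j\<in>UNIV. \<omega> (- of_nat (\<alpha> j * l j))) *
      hom_part (c i) (\<chi> j. of_real \<rho> * \<omega> (of_nat (l j))) k) \<le> M * (\<rho> / R) ^ k" for l
    using norm_hom_part_le[OF \<rho> R(2) M supn_torus[of l], of k] unfolding norm_mult norm_character
    by simp
  define G where "G = PiE (UNIV::'n set) (\<lambda>_. {..<m})"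
  have "of_nat m ^ CARD('n) * of_real \<rho> ^ k * c i \<alpha> =
        (\<Sum>l\<in>G. (\<Prod>j\<in>UNIV. \<omega> (- of_nat (\<alpha> j * l j))) *
                  hom_part (c i) (\<chi> j. of_real \<rho> * \<omega> (of_nat (l j))) k)"
    unfolding G_def k_def m_def \<omega>_def by (rule sum_torus_hom_part[symmetric])
  also have "cmod \<dots> \<le> (\<Sum>l\<in>G. M * (\<rho> / R) ^ k)"
    by (intro order_trans[OF norm_sum] sum_mono term_bound)
  also have "\<dots> = real m ^ CARD('n) * (M * (\<rho> / R) ^ k)"
    unfolding G_def by (simp add: card_PiE)
  finally have "real m ^ CARD('n) * (cmod (c i \<alpha>) * \<rho> ^ k) \<le> real m ^ CARD('n) * (M * (\<rho> / R) ^ k)"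
    using \<rho> by (simp add: norm_mult norm_power mult_ac)
  then have "cmod (c i \<alpha>) * \<rho> ^ k \<le> M * (\<rho> / R) ^ k"
    by (rule mult_left_le_imp_le) (simp add: m_def)
  also have "\<dots> = (M / R ^ k) * \<rho> ^ k"
    by (simp add: power_divide)
  finally show ?thesis
    unfolding k_def by (rule mult_right_le_imp_le) (use \<rho> in simp)
qed


lemma analytic_vec_ps_abs_conv_1: "ps_abs_conv (c i) 1"
  unfolding ps_abs_conv_def
proof (intro allI impI)
  fix \<rho> :: real assume \<rho>: "0 \<le> \<rho>" "\<rho> < 1"
  define R where "R = (\<rho> + 1) / 2"
  have R: "0 < R" "R < 1" "\<rho> < R" using \<rho> unfolding R_def by auto
  obtain M where M: "M \<ge> 0" "\<And>z i. supn z \<le> R \<Longrightarrow> cmod (F z $ i) \<le> M"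
    using analytic_vec_bounded[OF R(2)] by blast
  define q where "q = \<rho> / R"
  have q: "0 \<le> q" "q < 1" using \<rho> R unfolding q_def by auto
  have "(\<lambda>\<alpha>::'n\<Rightarrow>nat. M * q ^ mdeg \<alpha>) summable_on UNIV"
    by (rule summable_on_cmult_right[OF summable_on_power_mdeg[OF q]])
  then show "(\<lambda>\<alpha>. cmod (c i \<alpha>) * \<rho> ^ mdeg \<alpha>) summable_on UNIV"
  proof (rule summable_on_comparison_test)
    fix \<alpha> :: "'n \<Rightarrow> nat"
    have "cmod (c i \<alpha>) * \<rho> ^ mdeg \<alpha> \<le> M / R ^ mdeg \<alpha> * \<rho> ^ mdeg \<alpha>"
      using norm_ps_coeff_le[OF R(1,2) M(2)] \<rho> by (intro mult_right_mono) auto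
    also have "\<dots> = M * q ^ mdeg \<alpha>" unfolding q_def by (simp add: power_divide)
    finally show "cmod (c i \<alpha>) * \<rho> ^ mdeg \<alpha> \<le> M * q ^ mdeg \<alpha>" .
  qed (use \<rho> in auto)
qed

text \<open>On the complex line through \<open>z\<close> the function \<open>t \<mapsto> F (t z)\<close> is holomorphic on a disc
  of radius \<open>> 1\<close>, so its Taylor series, whose coefficients are the homogeneous parts,
  converges at \<open>t = 1\<close>.\<close>

lemma analytic_vec_eq_psum:
  assumes z: "supn z < 1"
  shows "F z $ i = psum (c i) z"
proof -
  define r where "r = 2 / (1 + supn z)"
  have r: "1 < r" "r * supn z < 1" using z supn_nonneg[of z] unfolding r_def by (auto simp: field_simps)
  have "ball 0 r \<subseteq> {t. cmod t * supn z < 1}"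
  proof
    fix t :: complex assume "t \<in> ball 0 r"
    then have "cmod t * supn z \<le> r * supn z" using supn_nonneg[of z] by (intro mult_right_mono) auto
    with r show "t \<in> {t. cmod t * supn z < 1}" by simp
  qed
  then have "(\<lambda>t. F (t *s z) $ i) holomorphic_on ball 0 r"
    by (rule holomorphic_on_subset[OF analytic_vec_holomorphic_on_line])
  then have "(\<lambda>k. (deriv ^^ k) (\<lambda>t. F (t *s z) $ i) 0 / fact k * (1 - 0) ^ k) sums F (1 *s z) $ i"
    by (rule holomorphic_power_series) (use r in simp)
  then have "(\<lambda>k. hom_part (c i) z k) sums F z $ i"
    by (simp add: hom_part_eq_deriv_line)
  moreover have "(\<lambda>k. hom_part (c i) z k) sums psum (c i) z"
    unfolding hom_part_def by (rule has_sum_imp_sums_mdeg[OF has_sum_psum[OF analytic_vec_ps_abs_conv_1 z]])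
  ultimately show ?thesis by (rule sums_unique2)
qed

end

end

lemma analytic_vec_polydisc1_ps_expansion:
  fixes F :: "complex^'n::finite \<Rightarrow> complex^'m::finite"
  assumes F_analytic: "analytic_vec polydisc1 F"
  obtains c :: "'m \<Rightarrow> ('n \<Rightarrow> nat) \<Rightarrow> complex"
  where "\<And>i. ps_abs_conv (c i) 1" "\<And>i z. supn z < 1 \<Longrightarrow> F z $ i = psum (c i) z"
    "\<And>R. 0 < R \<Longrightarrow> R < 1 \<Longrightarrow> \<exists>M\<ge>0. \<forall>i \<alpha>. cmod (c i \<alpha>) \<le> M / R ^ mdeg \<alpha>"
proof -
  have "0 \<in> polydisc1" by (simp add: polydisc1_iff)
  then obtain e and c :: "'m \<Rightarrow> ('n \<Rightarrow> nat) \<Rightarrow> complex"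
    where e: "e > 0" "\<And>i. ps_abs_conv (c i) e" "\<And>i z. supn z < e \<Longrightarrow> F z $ i = psum (c i) z"
    using analytic_vec_obtains_ps[OF F_analytic] by (metis diff_zero)
  have "\<exists>M\<ge>0. \<forall>i \<alpha>. cmod (c i \<alpha>) \<le> M / R ^ mdeg \<alpha>" if R: "0 < R" "R < 1" for R
  proof -
    obtain M where "M \<ge> 0" "\<And>z i. supn z \<le> R \<Longrightarrow> cmod (F z $ i) \<le> M"
      using analytic_vec_bounded[OF F_analytic R(2)] by blast
    then show ?thesis
      using norm_ps_coeff_le[OF F_analytic e R] by blast
  qed
  with that show ?thesis
    using analytic_vec_ps_abs_conv_1[OF F_analytic e] analytic_vec_eq_psum[OF F_analytic e] by blast
qed

lemma tcoeff_eq_ps_coeff: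
  fixes G :: "complex^'n::finite \<Rightarrow> complex^'m::finite"
  assumes "\<And>i. ps_abs_conv (c i) 1" "\<And>i z. supn z < 1 \<Longrightarrow> G z $ i = psum (c i) z"
  shows "tcoeff G \<alpha> $ i = c i \<alpha>"
  using pdiff_psum[OF assms(1) zero_less_one assms(2), of \<alpha>] mfact_pos[of \<alpha>]
  unfolding tcoeff_def by simp

section \<open>The Taylor coefficients of the remainder\<close>

definition trunc_support :: "nat \<Rightarrow> ('n::finite \<Rightarrow> nat) set" where
  "trunc_support N = {\<alpha>. 1 \<le> mdeg \<alpha> \<and> mdeg \<alpha> \<le> N}"

definition shift_coeffs :: "('n \<Rightarrow> nat) \<Rightarrow> (('n \<Rightarrow> nat) \<Rightarrow> complex) \<Rightarrow> ('n \<Rightarrow> nat) \<Rightarrow> complex" where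
  "shift_coeffs \<beta> c \<gamma> = (if \<beta> \<le> \<gamma> then c (\<gamma> - \<beta>) else 0)"

definition remR_coeff :: "complex^'n^'n \<Rightarrow> ('n \<Rightarrow> ('n \<Rightarrow> nat) \<Rightarrow> complex) \<Rightarrow>
      (('n::finite \<Rightarrow> nat) \<Rightarrow> complex^'n) \<Rightarrow> nat \<Rightarrow> 'n \<Rightarrow> ('n \<Rightarrow> nat) \<Rightarrow> complex" where
  "remR_coeff A c h N i \<gamma> =
     (\<Sum>j\<in>UNIV. \<Sum>\<alpha>\<in>trunc_support N. h \<alpha> $ i * of_nat (\<alpha> j) * shift_coeffs (\<alpha> - eidx j) (c j) \<gamma>)
     - (if \<gamma> \<in> trunc_support N then (A *v h \<gamma>) $ i else 0)"

lemma finite_trunc_support: "finite (trunc_support N)"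
  unfolding trunc_support_def by (rule finite_subset[OF _ finite_mdeg_le[of N]]) auto

lemma truncH_nth: "truncH h N w $ i = (\<Sum>\<alpha>\<in>trunc_support N. mpow w \<alpha> * h \<alpha> $ i)"
  unfolding truncH_def trunc_support_def by simp

lemma pd_truncH:
  "pd j (\<lambda>w. truncH h N w $ i) z =
     (\<Sum>\<alpha>\<in>trunc_support N. h \<alpha> $ i * (of_nat (\<alpha> j) * mpow z (\<alpha> - eidx j)))"
proof -
  have "((\<lambda>t. \<Sum>\<alpha>\<in>trunc_support N. mpow (vec_upd z j t) \<alpha> * h \<alpha> $ i) has_field_derivative
          (\<Sum>\<alpha>\<in>trunc_support N. of_nat (\<alpha> j) * mpow (vec_upd z j (z $ j)) (\<alpha> - eidx j) * h \<alpha> $ i))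
        (at (z $ j))"
    by (intro DERIV_sum DERIV_cmult_right has_field_derivative_mpow_vec_upd)
  then show ?thesis
    unfolding pd_def truncH_nth vec_upd_def[symmetric] by (simp add: DERIV_imp_deriv mult_ac)
qed

lemma matrix_vector_mult_truncH_nth:
  "(A *v truncH h N z) $ i = (\<Sum>\<gamma>\<in>trunc_support N. (A *v h \<gamma>) $ i * mpow z \<gamma>)"
  unfolding matrix_vector_mult_def truncH_nth
  by (simp add: sum_distrib_left sum_distrib_right mult_ac sum.swap[of _ "trunc_support N"])

lemma has_sum_shift_coeffs:
  assumes "((\<lambda>\<delta>. c \<delta> * mpow z \<delta>) has_sum S) UNIV"
  shows "((\<lambda>\<gamma>. shift_coeffs \<beta> c \<gamma> * mpow z \<gamma>) has_sum (mpow z \<beta> * S)) UNIV"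
proof -
  let ?g = "\<lambda>\<gamma>. shift_coeffs \<beta> c \<gamma> * mpow z \<gamma>"
  have inj: "inj (\<lambda>\<delta>. \<delta> + \<beta>)" by (auto simp: inj_def)
  have "((\<lambda>\<delta>. mpow z \<beta> * (c \<delta> * mpow z \<delta>)) has_sum (mpow z \<beta> * S)) UNIV"
    by (rule has_sum_cmult_right[OF assms])
  also have "(\<lambda>\<delta>. mpow z \<beta> * (c \<delta> * mpow z \<delta>)) = ?g \<circ> (\<lambda>\<delta>. \<delta> + \<beta>)"
    by (auto simp: fun_eq_iff shift_coeffs_def le_fun_def mpow_add)
  finally have "(?g has_sum (mpow z \<beta> * S)) (range (\<lambda>\<delta>. \<delta> + \<beta>))"
    using has_sum_reindex[OF inj] by blast
  moreover have "?g \<gamma> = 0" if "\<gamma> \<notin> range (\<lambda>\<delta>. \<delta> + \<beta>)" for \<gamma>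
  proof -
    have "\<not> \<beta> \<le> \<gamma>"
    proof
      assume "\<beta> \<le> \<gamma>"
      then have "\<gamma> = (\<gamma> - \<beta>) + \<beta>" by (auto simp: le_fun_def fun_eq_iff)
      with that show False by blast
    qed
    then show ?thesis unfolding shift_coeffs_def by simp
  qed
  ultimately show ?thesis
    by (subst (asm) has_sum_cong_neutral[where T=UNIV and g="?g"]) auto
qed

lemma has_sum_remR:
  fixes F :: "complex^'n::finite \<Rightarrow> complex^'n"
  assumes c_conv: "\<And>j. ps_abs_conv (c j) 1"
    and F_eq_psum: "\<And>j z. supn z < 1 \<Longrightarrow> F z $ j = psum (c j) z"
    and z: "supn z < 1"
  shows "((\<lambda>\<gamma>. remR_coeff A c h N i \<gamma> * mpow z \<gamma>) has_sum remR A F h N z $ i) UNIV"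
proof -
  have "((\<lambda>\<gamma>. h \<alpha> $ i * of_nat (\<alpha> j) * shift_coeffs (\<alpha> - eidx j) (c j) \<gamma> * mpow z \<gamma>) has_sum
          (h \<alpha> $ i * (of_nat (\<alpha> j) * mpow z (\<alpha> - eidx j)) * F z $ j)) UNIV" for j \<alpha>
    using has_sum_cmult_right[OF has_sum_shift_coeffs[OF has_sum_psum[OF c_conv z]],
        of "h \<alpha> $ i * of_nat (\<alpha> j)" "\<alpha> - eidx j" j]
    by (simp add: F_eq_psum[OF z] mult_ac)
  then have "((\<lambda>\<gamma>. \<Sum>j\<in>UNIV. \<Sum>\<alpha>\<in>trunc_support N.
                  h \<alpha> $ i * of_nat (\<alpha> j) * shift_coeffs (\<alpha> - eidx j) (c j) \<gamma> * mpow z \<gamma>) has_sum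
             (\<Sum>j\<in>UNIV. \<Sum>\<alpha>\<in>trunc_support N. h \<alpha> $ i * (of_nat (\<alpha> j) * mpow z (\<alpha> - eidx j)) * F z $ j))
           UNIV"
    by (intro has_sum_sum finite_trunc_support) auto
  moreover have "((\<lambda>\<gamma>. (if \<gamma> \<in> trunc_support N then (A *v h \<gamma>) $ i else 0) * mpow z \<gamma>) has_sum
                   (A *v truncH h N z) $ i) UNIV"
    unfolding matrix_vector_mult_truncH_nth
    by (rule has_sum_finite_neutralI[OF finite_trunc_support]) auto
  ultimately show ?thesis
    unfolding remR_def remR_coeff_def pd_truncH
    by (simp add: has_sum_diff sum_distrib_right left_diff_distrib)
qed

lemma formal_conj_iff:
  "formal_conj A F h \<longleftrightarrow> (\<forall>\<gamma> i.
     (\<Sum>j\<in>UNIV. \<Sum>\<alpha>\<in>{\<alpha>. \<alpha> \<le> \<gamma> + eidx j \<and> 1 \<le> \<alpha> j}.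
         of_nat (\<alpha> j) * h \<alpha> $ i * tcoeff F (\<gamma> + eidx j - \<alpha>) $ j) = (A *v h \<gamma>) $ i)"
  unfolding formal_conj_def le_fun_def fun_diff_def by simp

lemma diff_eidx_le_iff:
  assumes "1 \<le> \<alpha> j"
  shows "\<alpha> - eidx j \<le> \<gamma> \<longleftrightarrow> \<alpha> \<le> \<gamma> + eidx j"
    and "\<alpha> \<le> \<gamma> + eidx j \<Longrightarrow> \<gamma> - (\<alpha> - eidx j) = \<gamma> + eidx j - \<alpha>"
  using assms by (auto simp: le_fun_def fun_eq_iff eidx_def)

text \<open>The only multi-index of the formal identity missing from the truncation is \<open>\<alpha> = \<gamma> + e\<^sub>j\<close>,
  of degree \<open>N + 1\<close>; it meets the constant coefficient \<open>c 0 = F\<^sub>j(0) = 0\<close>.\<close>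

lemma sum_shift_coeffs_eq:
  fixes h :: "('n::finite \<Rightarrow> nat) \<Rightarrow> complex^'m::finite"
  assumes c0: "c 0 = 0" and deg: "mdeg \<gamma> \<le> N"
  shows "(\<Sum>\<alpha>\<in>trunc_support N. h \<alpha> $ i * of_nat (\<alpha> j) * shift_coeffs (\<alpha> - eidx j) c \<gamma>) =
         (\<Sum>\<alpha>\<in>{\<alpha>. \<alpha> \<le> \<gamma> + eidx j \<and> 1 \<le> \<alpha> j}. of_nat (\<alpha> j) * h \<alpha> $ i * c (\<gamma> + eidx j - \<alpha>))"
proof -
  define T where "T = {\<alpha>. \<alpha> \<le> \<gamma> + eidx j \<and> 1 \<le> \<alpha> j}"
  have "T \<subseteq> {\<alpha>. mdeg \<alpha> \<le> mdeg \<gamma> + 1}"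
    unfolding T_def using mdeg_mono[of _ "\<gamma> + eidx j"] by (auto simp: mdeg_add mdeg_eidx)
  then have finT: "finite T"
    using finite_mdeg_le finite_subset by blast
  have "(\<Sum>\<alpha>\<in>trunc_support N. h \<alpha> $ i * of_nat (\<alpha> j) * shift_coeffs (\<alpha> - eidx j) c \<gamma>) =
        (\<Sum>\<alpha>\<in>trunc_support N \<inter> T. h \<alpha> $ i * of_nat (\<alpha> j) * shift_coeffs (\<alpha> - eidx j) c \<gamma>)"
    by (rule sum.mono_neutral_right[OF finite_trunc_support])
       (auto simp: T_def shift_coeffs_def diff_eidx_le_iff)
  also have "\<dots> = (\<Sum>\<alpha>\<in>trunc_support N \<inter> T. of_nat (\<alpha> j) * h \<alpha> $ i * c (\<gamma> + eidx j - \<alpha>))"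
    by (rule sum.cong) (auto simp: T_def shift_coeffs_def diff_eidx_le_iff)
  also have "\<dots> = (\<Sum>\<alpha>\<in>T. of_nat (\<alpha> j) * h \<alpha> $ i * c (\<gamma> + eidx j - \<alpha>))"
  proof (rule sum.mono_neutral_left[OF finT])
    show "\<forall>\<alpha>\<in>T - trunc_support N \<inter> T. of_nat (\<alpha> j) * h \<alpha> $ i * c (\<gamma> + eidx j - \<alpha>) = 0"
    proof
      fix \<alpha> assume \<alpha>: "\<alpha> \<in> T - trunc_support N \<inter> T"
      then have "N < mdeg \<alpha>"
        using nth_le_mdeg[of \<alpha> j] unfolding T_def trunc_support_def by auto
      then have "\<alpha> = \<gamma> + eidx j"
        using \<alpha> deg by (intro eq_if_le_and_mdeg_le) (auto simp: T_def mdeg_add mdeg_eidx)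
      then show "of_nat (\<alpha> j) * h \<alpha> $ i * c (\<gamma> + eidx j - \<alpha>) = 0"
        using c0 by (simp add: zero_fun_def[symmetric])
    qed
  qed auto
  finally show ?thesis unfolding T_def .
qed

lemma remR_coeff_eq_0:
  fixes F :: "complex^'n::finite \<Rightarrow> complex^'n"
  assumes formal: "formal_conj A F h"
    and tcoeff_F: "\<And>\<alpha> j. tcoeff F \<alpha> $ j = c j \<alpha>"
    and c0: "\<And>j. c j 0 = 0"
    and h0: "\<forall>\<alpha>. mdeg \<alpha> = 0 \<longrightarrow> h \<alpha> = 0"
    and deg: "mdeg \<gamma> \<le> N"
  shows "remR_coeff A c h N i \<gamma> = 0"
proof -
  have "(\<Sum>\<alpha>\<in>trunc_support N. h \<alpha> $ i * of_nat (\<alpha> j) * shift_coeffs (\<alpha> - eidx j) (c j) \<gamma>) =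
        (\<Sum>\<alpha>\<in>{\<alpha>. \<alpha> \<le> \<gamma> + eidx j \<and> 1 \<le> \<alpha> j}. of_nat (\<alpha> j) * h \<alpha> $ i * tcoeff F (\<gamma> + eidx j - \<alpha>) $ j)"
    for j unfolding tcoeff_F by (rule sum_shift_coeffs_eq[where c="c j", OF c0 deg])
  then have "(\<Sum>j\<in>UNIV. \<Sum>\<alpha>\<in>trunc_support N. h \<alpha> $ i * of_nat (\<alpha> j) * shift_coeffs (\<alpha> - eidx j) (c j) \<gamma>)
        = (A *v h \<gamma>) $ i"
    using formal unfolding formal_conj_iff by simp
  moreover have "\<gamma> \<notin> trunc_support N \<Longrightarrow> h \<gamma> = 0"
    using deg h0 unfolding trunc_support_def by auto
  ultimately show ?thesis
    unfolding remR_coeff_def by auto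
qed

lemma norm_remR_coeff_le:
  assumes R: "0 < R" "R \<le> 1" and M: "M \<ge> 0"
    and c_bound: "\<And>j \<delta>. cmod (c j \<delta>) \<le> M / R ^ mdeg \<delta>"
    and deg: "N + 1 \<le> mdeg \<gamma>"
  shows "cmod (remR_coeff A c h N i \<gamma>)
           \<le> M / R ^ mdeg \<gamma> * (\<Sum>\<alpha>\<in>trunc_support N. supn (h \<alpha>) * real (mdeg \<alpha>))"
proof -
  define K where "K = M / R ^ mdeg \<gamma>"
  have K: "K \<ge> 0" unfolding K_def using M R by simp
  have shift_bound: "cmod (shift_coeffs \<beta> (c j) \<gamma>) \<le> K" for j \<beta>
  proof (cases "\<beta> \<le> \<gamma>")
    case True
    have "R ^ mdeg \<gamma> \<le> R ^ mdeg (\<gamma> - \<beta>)"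
      using R by (intro power_decreasing mdeg_mono) (auto simp: le_fun_def)
    then have "M / R ^ mdeg (\<gamma> - \<beta>) \<le> K"
      unfolding K_def using M R by (intro divide_left_mono) auto
    then show ?thesis using c_bound[of j "\<gamma> - \<beta>"] True unfolding shift_coeffs_def by simp
  qed (use K in \<open>simp add: shift_coeffs_def\<close>)
  have "\<gamma> \<notin> trunc_support N" using deg unfolding trunc_support_def by auto
  then have "cmod (remR_coeff A c h N i \<gamma>) \<le>
      (\<Sum>j\<in>UNIV. \<Sum>\<alpha>\<in>trunc_support N. cmod (h \<alpha> $ i * of_nat (\<alpha> j) * shift_coeffs (\<alpha> - eidx j) (c j) \<gamma>))"
    unfolding remR_coeff_def by (auto intro!: order_trans[OF norm_sum] sum_mono norm_sum)
  also have "\<dots> \<le> (\<Sum>j\<in>UNIV. \<Sum>\<alpha>\<in>trunc_support N. supn (h \<alpha>) * real (\<alpha> j) * K)"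
    unfolding norm_mult norm_of_nat
    by (intro sum_mono mult_mono norm_nth_le_supn shift_bound) (auto intro: mult_nonneg_nonneg supn_nonneg)
  also have "\<dots> = K * (\<Sum>\<alpha>\<in>trunc_support N. supn (h \<alpha>) * real (mdeg \<alpha>))"
    unfolding mdeg_def
    by (subst sum.swap) (simp add: sum_distrib_left sum_distrib_right mult_ac)
  finally show ?thesis unfolding K_def .
qed

section \<open>Gevrey and geometric estimates\<close>

lemma card_trunc_support_le: "card (trunc_support N :: ('n::finite \<Rightarrow> nat) set) \<le> (2 ^ N) ^ CARD('n)"
proof -
  have "trunc_support N \<subseteq> PiE (UNIV::'n set) (\<lambda>_. {..N})"
    by (rule order_trans[OF _ subset_PiE_mdeg_le]) (auto simp: trunc_support_def)
  then have "card (trunc_support N :: ('n \<Rightarrow> nat) set) \<le> card (PiE (UNIV::'n set) (\<lambda>_. {..N}))"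
    by (intro card_mono finite_PiE) auto
  also have "\<dots> = (N + 1) ^ CARD('n)"
    by (simp add: card_PiE)
  also have "\<dots> \<le> (2 ^ N) ^ CARD('n)"
    using Suc_leI[OF less_exp[of N]] by (intro power_mono) simp_all
  finally show ?thesis .
qed

lemma gevrey_term_le:
  fixes h :: "('n::finite \<Rightarrow> nat) \<Rightarrow> complex^'m::finite" and A1 B1 s :: real
  assumes A1: "A1 \<ge> 0" and B1: "B1 > 0" and s: "s > 0"
    and gev: "\<And>\<alpha>. 1 \<le> mdeg \<alpha> \<Longrightarrow> supn (h \<alpha>) \<le> A1 * B1 powr (- s * mdeg \<alpha>) * fact (mdeg \<alpha>) powr s"
    and k: "1 \<le> mdeg \<alpha>" "mdeg \<alpha> \<le> N"
  shows "supn (h \<alpha>) * real (mdeg \<alpha>) \<le> A1 * max 1 (B1 powr (-s)) ^ N * fact N powr s * 2 ^ N"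
proof -
  define b where "b = max 1 (B1 powr (-s))"
  have b: "b \<ge> 1" unfolding b_def by simp
  have "B1 powr (- s * real (mdeg \<alpha>)) = (B1 powr (-s)) ^ mdeg \<alpha>"
    using B1 by (simp add: powr_realpow[symmetric] powr_powr)
  also have "\<dots> \<le> b ^ N"
    using b k unfolding b_def by (intro order_trans[OF power_mono power_increasing]) auto
  finally have "A1 * B1 powr (- s * mdeg \<alpha>) * fact (mdeg \<alpha>) powr s \<le> A1 * b ^ N * fact N powr s"
    using A1 b s k by (intro mult_mono mult_left_mono powr_mono2) (auto intro: fact_mono)
  then have "supn (h \<alpha>) \<le> A1 * b ^ N * fact N powr s"
    using gev[OF k(1)] by linarith
  moreover have "mdeg \<alpha> \<le> 2 ^ N" using less_exp[of N] k by linarith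
  then have "real (mdeg \<alpha>) \<le> real (2 ^ N)" by (rule of_nat_mono)
  then have "real (mdeg \<alpha>) \<le> 2 ^ N" by simp
  ultimately show ?thesis
    unfolding b_def[symmetric] using A1 b by (intro mult_mono) (auto simp: supn_nonneg)
qed

lemma sum_gevrey_le:
  fixes h :: "('n::finite \<Rightarrow> nat) \<Rightarrow> complex^'m::finite" and A1 B1 s :: real
  assumes A1: "A1 \<ge> 0" and B1: "B1 > 0" and s: "s > 0"
    and gev: "\<And>\<alpha>. 1 \<le> mdeg \<alpha> \<Longrightarrow> supn (h \<alpha>) \<le> A1 * B1 powr (- s * mdeg \<alpha>) * fact (mdeg \<alpha>) powr s"
  shows "(\<Sum>\<alpha>\<in>trunc_support N. supn (h \<alpha>) * real (mdeg \<alpha>))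
           \<le> A1 * (2 ^ (CARD('n) + 1) * max 1 (B1 powr (-s))) ^ N * fact N powr s"
proof -
  define b where "b = max 1 (B1 powr (-s))"
  have b: "b \<ge> 1" unfolding b_def by simp
  have "(\<Sum>\<alpha>\<in>trunc_support N. supn (h \<alpha>) * real (mdeg \<alpha>))
          \<le> real (card (trunc_support N :: ('n \<Rightarrow> nat) set)) * (A1 * b ^ N * fact N powr s * 2 ^ N)"
    unfolding b_def
    by (rule sum_bounded_above, rule gevrey_term_le[OF A1 B1 s gev]) (auto simp: trunc_support_def)
  also have "\<dots> \<le> ((2::real) ^ N) ^ CARD('n) * (A1 * b ^ N * fact N powr s * 2 ^ N)"
  proof (rule mult_right_mono)
    show "real (card (trunc_support N :: ('n \<Rightarrow> nat) set)) \<le> (2 ^ N) ^ CARD('n)"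
      using of_nat_mono[OF card_trunc_support_le[of N, where 'n='n]] by simp
  qed (use A1 b in auto)
  also have "\<dots> = A1 * (((2::real) ^ N) ^ CARD('n) * 2 ^ N * b ^ N) * fact N powr s"
    by (simp only: mult_ac)
  also have "((2::real) ^ N) ^ CARD('n) * 2 ^ N = 2 ^ (N * CARD('n) + N)"
    by (simp only: power_mult[symmetric] power_add[symmetric])
  also have "N * CARD('n) + N = (CARD('n) + 1) * N"
    by simp
  finally show ?thesis
    unfolding b_def power_mult power_mult_distrib .
qed

lemma realpow_eq_powr_powr:
  fixes b s :: real
  assumes "0 < b" "s \<noteq> 0"
  shows "b ^ N = (b powr (-1 / s)) powr (- s * N)"
  using assms by (simp add: powr_powr powr_realpow)

lemma norm_has_sum_tail_le:
  fixes d :: "('n::finite \<Rightarrow> nat) \<Rightarrow> complex"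
  assumes S: "((\<lambda>\<gamma>. d \<gamma> * mpow z \<gamma>) has_sum S) UNIV"
    and low: "\<And>\<gamma>. mdeg \<gamma> \<le> N \<Longrightarrow> d \<gamma> = 0"
    and high: "\<And>\<gamma>. N + 1 \<le> mdeg \<gamma> \<Longrightarrow> cmod (d \<gamma>) \<le> K / r ^ mdeg \<gamma>"
    and r: "0 < r" and z: "supn z \<le> r / 4" and K: "0 \<le> K"
  shows "cmod S \<le> (4/3) ^ CARD('n) * K * 4 ^ (N + 1) * (supn z / r) ^ (N + 1)"
proof -
  define q where "q = supn z / r"
  have q: "0 \<le> q" "q \<le> 1/4"
    using z r supn_nonneg[of z] unfolding q_def by (simp_all add: divide_simps)
  define g where "g \<gamma> = K * (4 * q) ^ (N + 1) * (1/4) ^ mdeg \<gamma>" for \<gamma> :: "'n \<Rightarrow> nat"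
  have "(\<lambda>\<gamma>::'n\<Rightarrow>nat. (1/4::real) ^ mdeg \<gamma>) summable_on UNIV"
    by (rule summable_on_power_mdeg) simp_all
  then have g: "(g has_sum (K * (4 * q) ^ (N + 1) * (\<Sum>\<^sub>\<infinity>\<gamma>::'n\<Rightarrow>nat. (1/4::real) ^ mdeg \<gamma>))) UNIV"
    unfolding g_def by (rule has_sum_cmult_right[OF has_sum_infsum])
  have term_le: "norm (d \<gamma> * mpow z \<gamma>) \<le> g \<gamma>" for \<gamma>
  proof (cases "mdeg \<gamma> \<le> N")
    case True
    then show ?thesis using q K by (simp add: low g_def)
  next
    case False
    define l where "l = mdeg \<gamma> - (N + 1)"
    have l: "mdeg \<gamma> = (N + 1) + l" using False unfolding l_def by simp
    have "norm (d \<gamma> * mpow z \<gamma>) \<le> K / r ^ mdeg \<gamma> * supn z ^ mdeg \<gamma>"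
      unfolding norm_mult
      by (rule mult_mono[OF high norm_mpow_le]) (use False l r K in auto)
    also have "\<dots> = K * (q ^ (N + 1) * q ^ l)"
      unfolding q_def l power_add[symmetric] by (simp add: power_divide)
    also have "\<dots> \<le> K * (q ^ (N + 1) * (1/4) ^ l)"
      using q K by (intro mult_left_mono power_mono) auto
    also have "\<dots> = g \<gamma>"
      unfolding g_def l power_add power_mult_distrib by (simp add: power_one_over)
    finally show ?thesis .
  qed
  have "cmod S \<le> K * (4 * q) ^ (N + 1) * (\<Sum>\<^sub>\<infinity>\<gamma>::'n\<Rightarrow>nat. (1/4::real) ^ mdeg \<gamma>)"
    by (rule norm_infsum_le[OF S g term_le])
  also have "\<dots> \<le> K * (4 * q) ^ (N + 1) * (4/3) ^ CARD('n)"
    using K q infsum_power_mdeg_le[of "1/4", where 'n='n] by (intro mult_left_mono) simp_all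
  also have "\<dots> = (4/3) ^ CARD('n) * K * 4 ^ (N + 1) * (supn z / r) ^ (N + 1)"
    unfolding q_def by (simp only: power_mult_distrib mult_ac)
  finally show ?thesis .
qed

section \<open>The remainder of the truncated conjugacy\<close>

context
  fixes A :: "complex^'n^'n" and F :: "complex^'n::finite \<Rightarrow> complex^'n"
    and h :: "('n \<Rightarrow> nat) \<Rightarrow> complex^'n" and c :: "'n \<Rightarrow> ('n \<Rightarrow> nat) \<Rightarrow> complex"
  assumes c_conv: "\<And>i. ps_abs_conv (c i) 1"
    and F_eq_psum: "\<And>i z. supn z < 1 \<Longrightarrow> F z $ i = psum (c i) z"
    and c_bound: "\<And>R. 0 < R \<Longrightarrow> R < 1 \<Longrightarrow> \<exists>M\<ge>0. \<forall>i \<alpha>. cmod (c i \<alpha>) \<le> M / R ^ mdeg \<alpha>"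
    and c_0: "\<And>i. c i 0 = 0"
    and formal: "formal_conj A F h"
    and h_0: "\<forall>\<alpha>. mdeg \<alpha> = 0 \<longrightarrow> h \<alpha> = 0"
begin

lemma remR_coeff_low: "mdeg \<gamma> \<le> N \<Longrightarrow> remR_coeff A c h N i \<gamma> = 0"
  by (rule remR_coeff_eq_0[OF formal tcoeff_eq_ps_coeff[OF c_conv F_eq_psum] c_0 h_0])

lemma remR_coeff_high:
  assumes r: "0 < r" "r < 1"
  obtains M where "M \<ge> 0"
    "\<And>N i \<gamma>. N + 1 \<le> mdeg \<gamma> \<Longrightarrow> cmod (remR_coeff A c h N i \<gamma>)
        \<le> M / r ^ mdeg \<gamma> * (\<Sum>\<alpha>\<in>trunc_support N. supn (h \<alpha>) * real (mdeg \<alpha>))"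
proof -
  obtain M where M: "M \<ge> 0" "\<forall>i \<alpha>. cmod (c i \<alpha>) \<le> M / r ^ mdeg \<alpha>"
    using c_bound[OF r] by auto
  show thesis
  proof (rule that[OF M(1)])
    fix N i \<gamma> assume "N + 1 \<le> mdeg (\<gamma> :: 'n \<Rightarrow> nat)"
    then show "cmod (remR_coeff A c h N i \<gamma>)
        \<le> M / r ^ mdeg \<gamma> * (\<Sum>\<alpha>\<in>trunc_support N. supn (h \<alpha>) * real (mdeg \<alpha>))"
      using r M by (intro norm_remR_coeff_le) auto
  qed
qed

lemma ps_abs_conv_remR_coeff: "ps_abs_conv (remR_coeff A c h N i) 1"
  unfolding ps_abs_conv_def
proof (intro allI impI)
  fix \<rho> :: real assume \<rho>: "0 \<le> \<rho>" "\<rho> < 1"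
  define r where "r = (\<rho> + 1) / 2"
  have r: "0 < r" "r < 1" "\<rho> < r" using \<rho> unfolding r_def by auto
  obtain M where M: "M \<ge> 0" and high: "\<And>\<gamma>. N + 1 \<le> mdeg \<gamma> \<Longrightarrow> cmod (remR_coeff A c h N i \<gamma>)
        \<le> M / r ^ mdeg \<gamma> * (\<Sum>\<alpha>\<in>trunc_support N. supn (h \<alpha>) * real (mdeg \<alpha>))"
    by (rule remR_coeff_high[OF r(1,2)]) auto
  define K where "K = M * (\<Sum>\<alpha>\<in>trunc_support N. supn (h \<alpha>) * real (mdeg \<alpha>))"
  have K: "K \<ge> 0" unfolding K_def using M by (intro mult_nonneg_nonneg sum_nonneg) (auto simp: supn_nonneg)
  have q: "0 \<le> \<rho> / r" "\<rho> / r < 1" using \<rho> r by auto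
  have "(\<lambda>\<gamma>::'n\<Rightarrow>nat. K * (\<rho> / r) ^ mdeg \<gamma>) summable_on UNIV"
    by (rule summable_on_cmult_right[OF summable_on_power_mdeg[OF q]])
  then show "(\<lambda>\<gamma>. cmod (remR_coeff A c h N i \<gamma>) * \<rho> ^ mdeg \<gamma>) summable_on UNIV"
  proof (rule summable_on_comparison_test)
    fix \<gamma> :: "'n \<Rightarrow> nat"
    show "cmod (remR_coeff A c h N i \<gamma>) * \<rho> ^ mdeg \<gamma> \<le> K * (\<rho> / r) ^ mdeg \<gamma>"
    proof (cases "mdeg \<gamma> \<le> N")
      case True
      then show ?thesis using remR_coeff_low K q by simp
    next
      case False
      then have "cmod (remR_coeff A c h N i \<gamma>) * \<rho> ^ mdeg \<gamma> \<le> K / r ^ mdeg \<gamma> * \<rho> ^ mdeg \<gamma>"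
        using high[of \<gamma>] \<rho> unfolding K_def by (intro mult_right_mono) auto
      then show ?thesis using \<rho> by (simp add: power_divide)
    qed
  qed (use \<rho> in auto)
qed

lemma remR_eq_psum: "supn z < 1 \<Longrightarrow> remR A F h N z $ i = psum (remR_coeff A c h N i) z"
  using infsumI[OF has_sum_remR[OF c_conv F_eq_psum]] unfolding psum_def by simp

lemma pdiff_remR_low: "mdeg \<alpha> \<le> N \<Longrightarrow> pdiff \<alpha> (\<lambda>z. remR A F h N z $ i) 0 = 0"
  using pdiff_psum[OF ps_abs_conv_remR_coeff zero_less_one remR_eq_psum, of \<alpha>] remR_coeff_low
  by simp

lemma tcoeff_remR: "tcoeff (remR A F h N) \<alpha> $ i = remR_coeff A c h N i \<alpha>"
  by (rule tcoeff_eq_ps_coeff[OF ps_abs_conv_remR_coeff remR_eq_psum])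

context
  fixes s C b :: real
  assumes s: "s > 0" and C: "C \<ge> 0" and b: "b > 0"
    and h_sum: "\<And>N. (\<Sum>\<alpha>\<in>trunc_support N. supn (h \<alpha>) * real (mdeg \<alpha>)) \<le> C * b ^ N * fact N powr s"
begin

lemma remR_coeff_gevrey:
  assumes r: "0 < r" "r < 1"
  obtains M where "M \<ge> 0"
    "\<And>N i \<gamma>. N + 1 \<le> mdeg \<gamma> \<Longrightarrow>
       cmod (remR_coeff A c h N i \<gamma>) \<le> M * (b ^ N * fact N powr s) / r ^ mdeg \<gamma>"
proof -
  obtain M where M: "M \<ge> 0" and high: "\<And>N i \<gamma>. N + 1 \<le> mdeg \<gamma> \<Longrightarrow> cmod (remR_coeff A c h N i \<gamma>)
        \<le> M / r ^ mdeg \<gamma> * (\<Sum>\<alpha>\<in>trunc_support N. supn (h \<alpha>) * real (mdeg \<alpha>))"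
    by (rule remR_coeff_high[OF r]) auto
  show thesis
  proof (rule that[of "M * C"])
    fix N i \<gamma> assume "N + 1 \<le> mdeg (\<gamma> :: 'n \<Rightarrow> nat)"
    then have "cmod (remR_coeff A c h N i \<gamma>)
        \<le> M / r ^ mdeg \<gamma> * (\<Sum>\<alpha>\<in>trunc_support N. supn (h \<alpha>) * real (mdeg \<alpha>))"
      by (rule high)
    also have "\<dots> \<le> M / r ^ mdeg \<gamma> * (C * b ^ N * fact N powr s)"
      using h_sum[of N] M r by (intro mult_left_mono) auto
    finally show "cmod (remR_coeff A c h N i \<gamma>) \<le> M * C * (b ^ N * fact N powr s) / r ^ mdeg \<gamma>"
      by (simp add: mult_ac)
  qed (use M C in simp)
qed

lemma remR_tcoeff_gevrey_bound:
  assumes r: "0 < r" "r < 1"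
  shows "\<exists>A2>0. \<exists>B2>0. \<forall>N\<ge>1. \<forall>\<alpha>. N + 1 \<le> mdeg \<alpha> \<longrightarrow>
           supn (tcoeff (remR A F h N) \<alpha>)
             \<le> A2 * r powr (- real (mdeg \<alpha>)) * B2 powr (- s * N) * (fact N) powr s"
proof -
  obtain M where M: "M \<ge> 0" and high: "\<And>N i \<gamma>. N + 1 \<le> mdeg \<gamma> \<Longrightarrow>
       cmod (remR_coeff A c h N i \<gamma>) \<le> M * (b ^ N * fact N powr s) / r ^ mdeg \<gamma>"
    by (rule remR_coeff_gevrey[OF r]) auto
  show ?thesis
  proof (rule exI[of _ "M + 1"], intro conjI exI[of _ "b powr (-1 / s)"] allI impI)
  show "M + 1 > 0" "b powr (-1 / s) > 0" using M b by auto
  fix N :: nat and \<alpha> :: "'n \<Rightarrow> nat" assume "1 \<le> N" "N + 1 \<le> mdeg \<alpha>"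
  have component: "cmod (tcoeff (remR A F h N) \<alpha> $ i)
          \<le> (M + 1) * r powr (- real (mdeg \<alpha>)) * (b powr (-1 / s)) powr (- s * N) * fact N powr s" for i
  proof -
    have "cmod (tcoeff (remR A F h N) \<alpha> $ i) \<le> M * (b ^ N * fact N powr s) / r ^ mdeg \<alpha>"
      unfolding tcoeff_remR by (rule high) fact
    also have "\<dots> \<le> (M + 1) * (b ^ N * fact N powr s) / r ^ mdeg \<alpha>"
      using r b by (intro mult_right_mono divide_right_mono) auto
    also have "\<dots> = (M + 1) * r powr (- real (mdeg \<alpha>)) * (b powr (-1 / s)) powr (- s * N) * fact N powr s"
    proof -
      have "(b powr (-1 / s)) powr (- s * N) = b ^ N"
        by (rule realpow_eq_powr_powr[symmetric]) (use b s in auto)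
      moreover have "r powr (- real (mdeg \<alpha>)) = 1 / r ^ mdeg \<alpha>"
        using r by (simp add: powr_minus powr_realpow divide_inverse)
      ultimately show ?thesis by simp
    qed
    finally show ?thesis .
  qed
  then show "supn (tcoeff (remR A F h N) \<alpha>)
          \<le> (M + 1) * r powr (- real (mdeg \<alpha>)) * (b powr (-1 / s)) powr (- s * N) * fact N powr s"
    by (simp add: supn_le_iff component)
  qed
qed

lemma remR_gevrey_bound:
  assumes r: "0 < r" "r < 1"
  shows "\<exists>A3>0. \<exists>B3>0. \<forall>N\<ge>1. \<forall>z. supn z < r / 4 \<longrightarrow>
           supn (remR A F h N z) \<le> A3 * B3 powr (- s * N) * (fact N) powr s * (supn z / r) ^ (N + 1)"
proof -
  obtain M where M: "M \<ge> 0" and high: "\<And>N i \<gamma>. N + 1 \<le> mdeg \<gamma> \<Longrightarrow>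
       cmod (remR_coeff A c h N i \<gamma>) \<le> M * (b ^ N * fact N powr s) / r ^ mdeg \<gamma>"
    by (rule remR_coeff_gevrey[OF r]) auto
  define A3 where "A3 = 4 * (4/3) ^ CARD('n) * M + 1"
  show ?thesis
  proof (rule exI[of _ A3], intro conjI exI[of _ "(4 * b) powr (-1 / s)"] allI impI)
  show "A3 > 0" unfolding A3_def using M by (intro add_nonneg_pos mult_nonneg_nonneg) auto
  show "(4 * b) powr (-1 / s) > 0" using b by simp
  fix N :: nat and z :: "complex^'n" assume "1 \<le> N" and z: "supn z < r / 4"
  then have z1: "supn z < 1" using r by simp
  have component: "cmod (remR A F h N z $ i)
          \<le> A3 * ((4 * b) powr (-1 / s)) powr (- s * N) * fact N powr s * (supn z / r) ^ (N + 1)" for i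
  proof -
    have "cmod (remR A F h N z $ i)
            \<le> (4/3) ^ CARD('n) * (M * (b ^ N * fact N powr s)) * 4 ^ (N + 1) * (supn z / r) ^ (N + 1)"
      using M r z b by (intro norm_has_sum_tail_le[OF has_sum_remR[OF c_conv F_eq_psum z1] remR_coeff_low high])
         (auto intro: mult_nonneg_nonneg)
    also have "\<dots> = 4 * (4/3) ^ CARD('n) * M * (4 * b) ^ N * fact N powr s * (supn z / r) ^ (N + 1)"
      by (simp add: power_mult_distrib mult_ac)
    also have "\<dots> \<le> A3 * (4 * b) ^ N * fact N powr s * (supn z / r) ^ (N + 1)"
      unfolding A3_def using b r supn_nonneg[of z] by (intro mult_right_mono) auto
    also have "(4 * b) ^ N = ((4 * b) powr (-1 / s)) powr (- s * N)"
      by (rule realpow_eq_powr_powr) (use b s in auto)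
    finally show ?thesis .
  qed
  then show "supn (remR A F h N z)
          \<le> A3 * ((4 * b) powr (-1 / s)) powr (- s * N) * fact N powr s * (supn z / r) ^ (N + 1)"
    by (simp add: supn_le_iff component)
  qed
qed

end

end

theorem mainTheorem2:
  fixes F f :: "complex^'n::finite \<Rightarrow> complex^'n"
    and A :: "complex^'n^'n"
    and h :: "('n \<Rightarrow> nat) \<Rightarrow> complex^'n"
    and s :: real
  assumes F_an: "analytic_vec polydisc1 F"
    and F_eq: "\<forall>z\<in>polydisc1. F z = A *v z + f z"
    and f0: "f 0 = 0"
    and Df0: "(f has_derivative (\<lambda>_. 0)) (at 0)"
    and h0: "\<forall>\<alpha>. mdeg \<alpha> = 0 \<longrightarrow> h \<alpha> = 0"
    and h1: "\<forall>j. h (eidx j) = axis j 1"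
    and formal: "formal_conj A F h"
    and s_pos: "s > 0"
    and gevrey: "\<exists>A1>0. \<exists>B1>0. \<forall>\<alpha>. 1 \<le> mdeg \<alpha> \<longrightarrow>
                   supn (h \<alpha>) \<le> A1 * B1 powr (- s * mdeg \<alpha>) * (fact (mdeg \<alpha>)) powr s"
  shows "(\<forall>N\<ge>1. \<forall>\<alpha> i. mdeg \<alpha> \<le> N \<longrightarrow> pdiff \<alpha> (\<lambda>z. remR A F h N z $ i) 0 = 0)
       \<and> (\<forall>r. 0 < r \<and> r < 1 \<longrightarrow> (\<exists>A2>0. \<exists>B2>0. \<forall>N\<ge>1. \<forall>\<alpha>. N + 1 \<le> mdeg \<alpha> \<longrightarrow>
            supn (tcoeff (remR A F h N) \<alpha>)
              \<le> A2 * r powr (- real (mdeg \<alpha>)) * B2 powr (- s * N) * (fact N) powr s))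
       \<and> (\<forall>r. 0 < r \<and> r < 1 \<longrightarrow> (\<exists>A3>0. \<exists>B3>0. \<forall>N\<ge>1. \<forall>z. supn z < r / 4 \<longrightarrow>
            supn (remR A F h N z)
              \<le> A3 * B3 powr (- s * N) * (fact N) powr s * (supn z / r) ^ (N + 1)))"
proof -
  obtain c :: "'n \<Rightarrow> ('n \<Rightarrow> nat) \<Rightarrow> complex"
    where c_conv: "\<And>i. ps_abs_conv (c i) 1"
      and F_eq_psum: "\<And>i z. supn z < 1 \<Longrightarrow> F z $ i = psum (c i) z"
      and c_bound: "\<And>R. 0 < R \<Longrightarrow> R < 1 \<Longrightarrow> \<exists>M\<ge>0. \<forall>i \<alpha>. cmod (c i \<alpha>) \<le> M / R ^ mdeg \<alpha>"
    by (rule analytic_vec_polydisc1_ps_expansion[OF F_an]) auto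
  have "F 0 = 0" using F_eq f0 by (simp add: polydisc1_iff)
  then have c_0: "c i 0 = 0" for i using F_eq_psum[of 0 i] by (simp add: psum_zero)
  note remainder = c_conv F_eq_psum c_bound c_0 formal h0
  obtain A1 B1 where A1: "A1 > 0" and B1: "B1 > 0" and gev: "\<forall>\<alpha>. 1 \<le> mdeg \<alpha> \<longrightarrow>
      supn (h \<alpha>) \<le> A1 * B1 powr (- s * mdeg \<alpha>) * (fact (mdeg \<alpha>)) powr s"
    using gevrey by auto
  define b where "b = 2 ^ (CARD('n) + 1) * max 1 (B1 powr (-s))"
  have b: "b > 0" unfolding b_def by (simp add: less_max_iff_disj)
  have h_sum: "(\<Sum>\<alpha>\<in>trunc_support N. supn (h \<alpha>) * real (mdeg \<alpha>)) \<le> A1 * b ^ N * fact N powr s" for N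
    unfolding b_def using A1 B1 s_pos gev by (intro sum_gevrey_le) auto
  note gevrey_remainder = remainder s_pos less_imp_le[OF A1] b h_sum
  show ?thesis
    using pdiff_remR_low[OF remainder] remR_tcoeff_gevrey_bound[OF gevrey_remainder]
      remR_gevrey_bound[OF gevrey_remainder]
    by auto
qed

end
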